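(* Let $k\ge 2$, $1\le m<k$, and for each alternative $\ell\in\{1,\dots,k\}$ let $X_{\ell,1},X_{\ell,2},\dots$ be i.i.d. real random variables with mean $\mu_\ell$, independent across alternatives, with the means pairwise distinct and ordered as $\mu_{\langle 1\rangle}>\mu_{\langle 2\rangle}>\dots>\mu_{\langle k\rangle}$. Suppose Assumptions 1–4 of the context hold. Let $r_{\langle 1\rangle},\dots,r_{\langle k\rangle}>0$ with $\sum_\ell r_{\langle\ell\rangle}=1$, and for $T>0$ let $\mathrm{PFS}_T=\Pr\Big\{\bigcup_{i=1}^m\bigcup_{j=m+1}^k\big(\bar X_{\langle i\rangle}(r_{\langle i\rangle}T)\le \bar X_{\langle j\rangle}(r_{\langle j\rangle}T)\big)\Big\}$. Then $-\lim_{T\to\infty}\frac1T\log\mathrm{PFS}_T=\min_{i\in\{1,\dots,m\},\,j\in\{m+1,\dots,k\}}G_{ij}(r_{\langle i\rangle},r_{\langle j\rangle})$, where $G_{ij}(r_{\langle i\rangle},r_{\langle j\rangle})=\inf_{x\in\mathbb R}\big(r_{\langle i\rangle}\Lambda^*_{\langle i\rangle}(x)+r_{\langle j\rangle}\Lambda^*_{\langle j\rangle}(x)\big)$.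
   Context: $\bar X_\ell(n)$ denotes the sample mean of the first $n$ replications of alternative $\ell$ (integrality of $r_\ell T$ is ignored). Let $\Lambda^{(n)}_\ell(\lambda)=\log\mathbb E[e^{\lambda\bar X_\ell(n)}]$. Assumption 1: for each $\ell$ and all $\lambda\in\mathbb R$ the limit $\Lambda_\ell(\lambda)=\lim_{n\to\infty}\frac1n\Lambda^{(n)}_\ell(n\lambda)$ exists as an extended real number. Let $\mathcal D_{\Lambda_\ell}=\{\lambda:\Lambda_\ell(\lambda)<\infty\}$ with interior $\mathcal D^o_{\Lambda_\ell}$, and $\mathcal F_\ell=\{\Lambda_\ell'(\lambda):\lambda\in\mathcal D^o_{\Lambda_\ell}\}$ with interior $\mathcal F^o_\ell$. Assumption 2: $0\in\mathcal D^o_{\Lambda_\ell}$ for all $\ell$. Assumption 3: each $\Lambda_\ell$ is strictly convex and continuous on $\mathcal D^o_{\Lambda_\ell}$ and steep, i.e. $|\Lambda_\ell'(\lambda_n)|\to\infty$ for every sequence $\lambda_n\in\mathcal D^o_{\Lambda_\ell}$ converging to a boundary point of $\mathcal D^o_{\Lambda_\ell}$. Assumption 4: $[\mu_{\langle k\rangle},\mu_{\langle 1\rangle}]\subset\bigcap_{\ell=1}^k\mathcal F^o_\ell$. $\Lambda^*_\ell(x)=\sup_{\lambda\in\mathbb R}\{\lambda x-\Lambda_\ell(\lambda)\}$ is the Fenchel–Legendre transform. *)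

theory Defs
  imports "HOL-Probability.Probability"
begin

definition smean :: "(nat \<Rightarrow> 'a \<Rightarrow> real) \<Rightarrow> nat \<Rightarrow> 'a \<Rightarrow> real" where
  "smean Y n \<omega> = (\<Sum>t<n. Y t \<omega>) / real n"

definition eln :: "ennreal \<Rightarrow> ereal" where
  "eln x = (if x = \<infinity> then \<infinity> else if x = 0 then -\<infinity> else ereal (ln (enn2real x)))"

definition cgf_n :: "'a measure \<Rightarrow> (nat \<Rightarrow> 'a \<Rightarrow> real) \<Rightarrow> nat \<Rightarrow> real \<Rightarrow> ereal" where
  "cgf_n M Y n lam = eln (\<integral>\<^sup>+ \<omega>. ennreal (exp (lam * smean Y n \<omega>)) \<partial>M)"

definition edom :: "(real \<Rightarrow> ereal) \<Rightarrow> real set" where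
  "edom L = {lam. L lam < \<infinity>}"

(* real-valued version of \<Lambda> (meaningful on the effective domain) *)
definition rpart :: "(real \<Rightarrow> ereal) \<Rightarrow> real \<Rightarrow> real" where
  "rpart L lam = real_of_ereal (L lam)"

definition Fset :: "(real \<Rightarrow> ereal) \<Rightarrow> real set" where
  "Fset L = (\<lambda>lam. deriv (rpart L) lam) ` interior (edom L)"

definition strictly_convex_on :: "real set \<Rightarrow> (real \<Rightarrow> real) \<Rightarrow> bool" where
  "strictly_convex_on S f \<longleftrightarrow> (\<forall>x\<in>S. \<forall>y\<in>S. x \<noteq> y \<longrightarrow>
     (\<forall>u::real. 0 < u \<and> u < 1 \<longrightarrow> f (u * x + (1 - u) * y) < u * f x + (1 - u) * f y))"

definition steep :: "(real \<Rightarrow> ereal) \<Rightarrow> bool" where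
  "steep L \<longleftrightarrow> (\<forall>s b. (\<forall>n. s n \<in> interior (edom L)) \<longrightarrow> b \<in> frontier (interior (edom L)) \<longrightarrow>
      s \<longlonglongrightarrow> b \<longrightarrow> filterlim (\<lambda>n. \<bar>deriv (rpart L) (s n)\<bar>) at_top sequentially)"

definition legendre :: "(real \<Rightarrow> ereal) \<Rightarrow> real \<Rightarrow> ereal" where
  "legendre L x = (SUP lam. ereal (lam * x) - L lam)"

definition Grate :: "(real \<Rightarrow> ereal) \<Rightarrow> (real \<Rightarrow> ereal) \<Rightarrow> real \<Rightarrow> real \<Rightarrow> ereal" where
  "Grate Li Lj ri rj = (INF x. ereal ri * legendre Li x + ereal rj * legendre Lj x)"

end

(*
  Since the observations of each alternative are independent and identically distributed, the
  limit in Assumption 1 can be computed exactly: Lam l is the logarithm of the moment generating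
  function of X l 0, extended by infinity outside its domain.  The misselection event is the union,
  over pairs i <= m < j, of the events that the sample mean of <i> does not exceed that of <j>; so
  its exponential rate is the smallest of the pairwise rates, and it suffices to show that each
  pairwise rate is G_ij.  Upper bound: cover the pairwise event by finitely many one- and
  two-sided tails at the points of a fine grid between the two means, and bound each by Chernoff's
  inequality; the Legendre transforms are Lipschitz near that interval, so the grid costs little.
  Lower bound: tilt the two sample means to nearby points a < b whose combined rate is close to
  G_ij, and show by a second, small tilt that under the tilted measure both sample means stay near
  a and b.  Assumption 4 supplies the tilts with these means.
*)

theory Submission
  imports Defs
begin

lemma abs_exp_minus_one_minus_le: "\<bar>exp u - 1 - u\<bar> \<le> u\<^sup>2 * exp \<bar>u\<bar>" for u :: real
proof -
  obtain t where t: "\<bar>t\<bar> \<le> \<bar>u\<bar>" "exp u = (\<Sum>m<2. (u ^ m) / fact m) + (exp t / fact 2) * u ^ 2"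
    using Maclaurin_exp_le[of u 2] by blast
  have "exp u - 1 - u = exp t / 2 * u\<^sup>2" using t(2) by (simp add: eval_nat_numeral)
  then have "\<bar>exp u - 1 - u\<bar> = exp t / 2 * u\<^sup>2" by (simp only: abs_of_nonneg) simp
  also have "\<dots> \<le> exp \<bar>u\<bar> * u\<^sup>2"
  proof (rule mult_right_mono)
    have "exp t \<le> exp \<bar>u\<bar>" using t(1) by simp
    then show "exp t / 2 \<le> exp \<bar>u\<bar>" using exp_gt_zero[of t] by linarith
  qed simp
  finally show ?thesis by (simp add: mult.commute)
qed

lemma power2_le_two_exp_abs: "x\<^sup>2 \<le> 2 * exp \<bar>x\<bar>" for x :: real
proof -
  obtain t where t: "exp \<bar>x\<bar> = (\<Sum>m<3. (\<bar>x\<bar> ^ m) / fact m) + (exp t / fact 3) * \<bar>x\<bar> ^ 3"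
    using Maclaurin_exp_le[of "\<bar>x\<bar>" 3] by blast
  then have "exp \<bar>x\<bar> = 1 + \<bar>x\<bar> + x\<^sup>2/2 + exp t / 6 * \<bar>x\<bar>^3"
    by (simp add: eval_nat_numeral fact_numeral)
  moreover have "0 \<le> exp t / 6 * \<bar>x\<bar>^3" by simp
  ultimately show ?thesis by simp
qed

lemma exp_mult_exp_abs_le: "exp (e * x) * exp (d * \<bar>x\<bar>) \<le> exp ((e + d) * x) + exp ((e - d) * x)"
  for e d x :: real
  by (cases "x \<ge> 0") (simp_all add: exp_add[symmetric] algebra_simps add_increasing add_increasing2)

lemma abs_exp_second_order_le:
  fixes x h e d :: real
  assumes d: "d > 0" and h: "\<bar>h\<bar> \<le> d"
  shows "\<bar>exp ((e + h) * x) - exp (e * x) - h * (x * exp (e * x))\<bar>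
         \<le> h\<^sup>2 * (2 / d\<^sup>2 * (exp (e * x) * exp ((2 * d) * \<bar>x\<bar>)))"
proof -
  have "exp \<bar>h * x\<bar> \<le> exp (d * \<bar>x\<bar>)"
    using h by (simp add: abs_mult mult_right_mono)
  moreover have "x\<^sup>2 \<le> 2 / d\<^sup>2 * exp (d * \<bar>x\<bar>)"
    using power2_le_two_exp_abs[of "d * x"] d by (simp add: abs_mult power_mult_distrib field_simps)
  ultimately have "(h * x)\<^sup>2 * exp \<bar>h * x\<bar> \<le> h\<^sup>2 * (2 / d\<^sup>2 * exp (d * \<bar>x\<bar>)) * exp (d * \<bar>x\<bar>)"
    unfolding power_mult_distrib by (intro mult_mono mult_left_mono) auto
  also have "\<dots> = h\<^sup>2 * (2 / d\<^sup>2 * exp ((2 * d) * \<bar>x\<bar>))"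
    by (simp add: exp_add[symmetric] algebra_simps)
  finally have "\<bar>exp (h * x) - 1 - h * x\<bar> \<le> h\<^sup>2 * (2 / d\<^sup>2 * exp ((2 * d) * \<bar>x\<bar>))"
    using abs_exp_minus_one_minus_le[of "h * x"] by linarith
  then have "exp (e * x) * \<bar>exp (h * x) - 1 - h * x\<bar>
      \<le> exp (e * x) * (h\<^sup>2 * (2 / d\<^sup>2 * exp ((2 * d) * \<bar>x\<bar>)))"
    by (intro mult_left_mono) auto
  moreover have "exp ((e + h) * x) - exp (e * x) - h * (x * exp (e * x))
      = exp (e * x) * (exp (h * x) - 1 - h * x)"
    by (simp add: exp_add distrib_right algebra_simps)
  ultimately show ?thesis by (simp add: abs_mult ac_simps)
qed

lemma eln_ennreal: "y > 0 \<Longrightarrow> eln (ennreal y) = ereal (ln y)"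
  unfolding eln_def by (auto simp: ennreal_eq_0_iff)

lemma mult_le_of_mean_in_window:
  fixes e s a \<rho> n :: real
  assumes "n > 0" and "\<bar>s / n - a\<bar> < \<rho>"
  shows "e * s \<le> n * (e * a + \<bar>e\<bar> * \<rho>)"
proof -
  have "e * (s / n - a) \<le> \<bar>e\<bar> * \<bar>s / n - a\<bar>" by (metis abs_ge_self abs_mult)
  also have "\<dots> \<le> \<bar>e\<bar> * \<rho>" using assms(2) by (intro mult_left_mono) auto
  finally have "e * (s / n - a) \<le> \<bar>e\<bar> * \<rho>" .
  then have "n * (e * (s / n - a)) \<le> n * (\<bar>e\<bar> * \<rho>)" using assms(1) by simp
  then show ?thesis using assms(1) by (simp add: algebra_simps)
qed

lemma exp_mult_le_power: "exp t \<le> q \<Longrightarrow> exp (real n * t) \<le> q ^ n"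
  by (simp add: exp_of_nat_mult power_mono)

lemma exp_le_tilts_outside_box:
  fixes n m s t a b \<rho> h e e' :: real
  assumes n: "0 < n" and m: "0 < m" and h: "0 \<le> h"
    and outside: "\<not> (\<bar>s / n - a\<bar> < \<rho> \<and> \<bar>t / m - b\<bar> < \<rho>)"
  shows "exp (e * s + e' * t) \<le> exp ((e + h) * s + e' * t + - (h * n * (a + \<rho>)))
    + exp ((e - h) * s + e' * t + h * n * (a - \<rho>)) + exp (e * s + (e' + h) * t + - (h * m * (b + \<rho>)))
    + exp (e * s + (e' - h) * t + h * m * (b - \<rho>))"
proof -
  from outside n m consider "n * (a + \<rho>) \<le> s" | "s \<le> n * (a - \<rho>)" | "m * (b + \<rho>) \<le> t" | "t \<le> m * (b - \<rho>)"
    by (auto simp: abs_less_iff not_less field_simps)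
  then have "e * s + e' * t \<le> (e + h) * s + e' * t + - (h * n * (a + \<rho>))
      \<or> e * s + e' * t \<le> (e - h) * s + e' * t + h * n * (a - \<rho>)
      \<or> e * s + e' * t \<le> e * s + (e' + h) * t + - (h * m * (b + \<rho>))
      \<or> e * s + e' * t \<le> e * s + (e' - h) * t + h * m * (b - \<rho>)"
  proof cases
    case 1 then have "0 \<le> h * (s - n * (a + \<rho>))" using h by simp
    then show ?thesis by (simp add: algebra_simps)
  next
    case 2 then have "0 \<le> h * (n * (a - \<rho>) - s)" using h by simp
    then show ?thesis by (simp add: algebra_simps)
  next
    case 3 then have "0 \<le> h * (t - m * (b + \<rho>))" using h by simp
    then show ?thesis by (simp add: algebra_simps)
  next
    case 4 then have "0 \<le> h * (m * (b - \<rho>) - t)" using h by simp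
    then show ?thesis by (simp add: algebra_simps)
  qed
  then show ?thesis
    by (elim disjE) (simp_all add: add_increasing add_increasing2 add_nonneg_nonneg)
qed

lemma exp_sample_counts_ge:
  fixes n m :: nat and r s T c c' g :: real
  assumes "real n \<le> r * T + 1" "real m \<le> s * T + 1" "0 \<le> c" "0 \<le> c'" "r * c + s * c' \<le> g" "0 \<le> T"
  shows "exp (- ln 2 - c - c' - T * g) \<le> exp (- real n * c - real m * c') / 2"
proof -
  have "T * (r * c + s * c') \<le> T * g" using assms(5,6) by (intro mult_left_mono)
  moreover have "real n * c \<le> (r * T + 1) * c" "real m * c' \<le> (s * T + 1) * c'"
    using assms(1-4) by (simp_all add: mult_right_mono)
  ultimately have "- ln 2 - c - c' - T * g \<le> - ln 2 - real n * c - real m * c'"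
    by (simp add: algebra_simps)
  then have "exp (- ln 2 - c - c' - T * g) \<le> exp (- ln 2 - real n * c - real m * c')" by simp
  also have "\<dots> = exp (- real n * c - real m * c') / 2" by (simp add: exp_diff exp_minus exp_add field_simps)
  finally show ?thesis .
qed

definition sample_size :: "real \<Rightarrow> real \<Rightarrow> nat" where
  "sample_size r T = nat \<lceil>r * T\<rceil>"

lemma sample_size_bounds:
  assumes "r > 0" "T > 0"
  shows "r * T \<le> real (sample_size r T)" "real (sample_size r T) \<le> r * T + 1" "sample_size r T > 0"
  using assms mult_pos_pos[OF assms] unfolding sample_size_def by linarith+

lemma sample_size_mult_le:
  assumes "r > 0" "T > 0"
  shows "real (sample_size r T) * c \<le> r * T * c + \<bar>c\<bar>"
proof (cases "c \<ge> 0")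
  case True
  have "real (sample_size r T) * c \<le> (r * T + 1) * c"
    using sample_size_bounds(2)[OF assms] True by (intro mult_right_mono) auto
  then show ?thesis using True by (simp add: algebra_simps)
next
  case False
  have "real (sample_size r T) * c \<le> (r * T) * c"
    using sample_size_bounds(1)[OF assms] False by (intro mult_right_mono_neg) auto
  then show ?thesis by simp
qed

lemma grid_cover:
  fixes y z lo hi :: real
  assumes yz: "y \<le> z" and lohi: "lo < hi" and N: "N > 0"
  defines "x \<equiv> \<lambda>q::nat. lo + real q * (hi - lo) / real N"
  shows "y \<le> lo \<or> hi \<le> z \<or> (\<exists>q\<in>{1..N}. y \<le> x q \<and> x (q - 1) \<le> z)"
proof (rule disjCI)
  assume "\<not> (hi \<le> z \<or> (\<exists>q\<in>{1..N}. y \<le> x q \<and> x (q - 1) \<le> z))"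
  then have z: "z < hi" and none: "\<And>q. q \<in> {1..N} \<Longrightarrow> y \<le> x q \<Longrightarrow> z < x (q - 1)" by auto
  define t where "t = (y - lo) * real N / (hi - lo)"
  define q where "q = nat \<lceil>t\<rceil>"
  show "y \<le> lo"
  proof (rule ccontr)
    assume "\<not> y \<le> lo"
    then have t0: "t > 0" using lohi N by (simp add: t_def)
    have "t < real N" using yz z lohi N by (simp add: t_def field_simps)
    have tq: "t \<le> real q" "real q - 1 < t" using t0 by (auto simp: q_def) linarith+
    then have q: "q \<in> {1..N}"
      using t0 \<open>t < real N\<close> by (auto simp: q_def nat_le_iff ceiling_le_iff) linarith
    have step: "(hi - lo) / real N > 0" using lohi N by simp
    have y: "y = lo + t * ((hi - lo) / real N)" using lohi N by (simp add: t_def)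
    have "t * ((hi - lo) / real N) \<le> real q * ((hi - lo) / real N)"
      "(real q - 1) * ((hi - lo) / real N) \<le> t * ((hi - lo) / real N)"
      using tq step by (intro mult_right_mono; simp)+
    then have "y \<le> x q" "x (q - 1) \<le> y"
      using q unfolding y x_def by (simp_all add: of_nat_diff)
    then show False using none[OF q] yz by linarith
  qed
qed

lemma sum_singleton_Times: "(\<Sum>p\<in>{l} \<times> A. g p) = (\<Sum>t\<in>A. g (l, t))"
proof -
  have "{l} \<times> A = Pair l ` A" by auto
  then show ?thesis by (simp add: sum.reindex inj_on_def)
qed

lemma prod_singleton_Times: "(\<Prod>p\<in>{l} \<times> A. g p) = (\<Prod>t\<in>A. g (l, t))"
proof -
  have "{l} \<times> A = Pair l ` A" by auto
  then show ?thesis by (simp add: prod.reindex inj_on_def)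
qed

lemma Collect_Bex_Times_eq_UN:
  "{x \<in> S. \<exists>i\<in>A. \<exists>j\<in>B. Q i j x} = (\<Union>p\<in>A \<times> B. {x \<in> S. Q (fst p) (snd p) x})"
proof (intro equalityI subsetI)
  fix x assume "x \<in> {x \<in> S. \<exists>i\<in>A. \<exists>j\<in>B. Q i j x}"
  then obtain i j where "x \<in> S" "i \<in> A" "j \<in> B" "Q i j x" by blast
  then show "x \<in> (\<Union>p\<in>A \<times> B. {x \<in> S. Q (fst p) (snd p) x})" by (intro UN_I[of "(i, j)"]) auto
next
  fix x assume "x \<in> (\<Union>p\<in>A \<times> B. {x \<in> S. Q (fst p) (snd p) x})"
  then obtain i j where "x \<in> S" "i \<in> A" "j \<in> B" "Q i j x" by auto
  then show "x \<in> {x \<in> S. \<exists>i\<in>A. \<exists>j\<in>B. Q i j x}" by blast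
qed

lemma Min_ereal_image: "finite S \<Longrightarrow> S \<noteq> {} \<Longrightarrow> Min (ereal ` S) = ereal (Min S)"
  using mono_Min_commute[of ereal S] by (simp add: mono_def)

section \<open>Exponential rates of decay\<close>

definition decays_at_least :: "(real \<Rightarrow> real) \<Rightarrow> real \<Rightarrow> bool" where
  "decays_at_least f g \<longleftrightarrow> (\<exists>C. \<forall>T>0. f T \<le> exp (C - T * g))"

definition decays_at_most :: "(real \<Rightarrow> real) \<Rightarrow> real \<Rightarrow> bool" where
  "decays_at_most f g \<longleftrightarrow> (\<exists>C. \<forall>\<^sub>F T in at_top. exp (C - T * g) \<le> f T)"

lemma decays_at_least_mono:
  assumes "decays_at_least f g" "g' \<le> g" "\<And>T. T > 0 \<Longrightarrow> f' T \<le> f T"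
  shows "decays_at_least f' g'"
proof -
  obtain C where C: "\<And>T. T > 0 \<Longrightarrow> f T \<le> exp (C - T * g)" using assms(1) by (auto simp: decays_at_least_def)
  have "f' T \<le> exp (C - T * g')" if "T > 0" for T
  proof -
    have "T * g' \<le> T * g" using that assms(2) by (intro mult_left_mono) auto
    then show ?thesis using assms(3)[OF that] C[OF that] by (meson order_trans exp_le_cancel_iff diff_left_mono)
  qed
  then show ?thesis by (auto simp: decays_at_least_def)
qed

lemma decays_at_least_add:
  assumes "decays_at_least f g" "decays_at_least f' g"
  shows "decays_at_least (\<lambda>T. f T + f' T) g"
proof -
  obtain C C' where "\<And>T. T > 0 \<Longrightarrow> f T \<le> exp (C - T * g)" "\<And>T. T > 0 \<Longrightarrow> f' T \<le> exp (C' - T * g)"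
    using assms by (auto simp: decays_at_least_def)
  moreover have "exp (ln (exp C + exp C')) = exp C + exp C'" by (simp add: add_pos_pos)
  ultimately have "f T + f' T \<le> exp (ln (exp C + exp C') - T * g)" if "T > 0" for T
    using that by (simp only: exp_diff add_divide_distrib add_mono)
  then show ?thesis by (auto simp: decays_at_least_def)
qed

lemma decays_at_least_sum:
  assumes "finite I" "\<And>p. p \<in> I \<Longrightarrow> decays_at_least (f p) g"
  shows "decays_at_least (\<lambda>T. \<Sum>p\<in>I. f p T) g"
  using assms
proof (induction I rule: finite_induct)
  case empty
  have "0 \<le> exp (0 - T * g)" for T by simp
  then show ?case by (auto simp: decays_at_least_def)
next
  case (insert p I)
  then show ?case by (simp add: decays_at_least_add)
qed

lemma decays_at_most_mono:
  assumes "decays_at_most f g" "g \<le> g'" "\<forall>\<^sub>F T in at_top. f T \<le> f' T"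
  shows "decays_at_most f' g'"
proof -
  obtain C where C: "\<forall>\<^sub>F T in at_top. exp (C - T * g) \<le> f T" using assms(1) by (auto simp: decays_at_most_def)
  have "\<forall>\<^sub>F T in at_top. exp (C - T * g') \<le> f' T"
    using C assms(3) eventually_ge_at_top[of 0]
  proof eventually_elim
    case (elim T)
    have "T * g \<le> T * g'" using elim(3) assms(2) by (intro mult_left_mono) auto
    then show ?case using elim(1,2) by (meson order_trans exp_le_cancel_iff diff_left_mono)
  qed
  then show ?thesis by (auto simp: decays_at_most_def)
qed

lemma tendsto_ln_div_of_decays:
  assumes up: "\<And>\<epsilon>. \<epsilon> > 0 \<Longrightarrow> decays_at_least f (g - \<epsilon>)"
    and low: "\<And>\<epsilon>. \<epsilon> > 0 \<Longrightarrow> decays_at_most f (g + \<epsilon>)"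
  shows "((\<lambda>T. ln (f T) / T) \<longlongrightarrow> - g) at_top"
proof (rule tendstoI)
  fix e :: real assume e: "e > 0"
  define \<epsilon> where "\<epsilon> = e / 3"
  have \<epsilon>: "\<epsilon> > 0" using e by (simp add: \<epsilon>_def)
  obtain Cu where Cu: "\<And>T. T > 0 \<Longrightarrow> f T \<le> exp (Cu - T * (g - \<epsilon>))"
    using up[OF \<epsilon>] by (auto simp: decays_at_least_def)
  obtain Cl where Cl: "\<forall>\<^sub>F T in at_top. exp (Cl - T * (g + \<epsilon>)) \<le> f T"
    using low[OF \<epsilon>] by (auto simp: decays_at_most_def)
  show "\<forall>\<^sub>F T in at_top. dist (ln (f T) / T) (- g) < e"
    using Cl eventually_ge_at_top[of "max 1 (max (\<bar>Cu\<bar> / \<epsilon>) (\<bar>Cl\<bar> / \<epsilon>))"]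
  proof eventually_elim
    case (elim T)
    then have T: "T > 0" "\<bar>Cu\<bar> \<le> \<epsilon> * T" "\<bar>Cl\<bar> \<le> \<epsilon> * T"
      using \<epsilon> by (auto simp: field_simps)
    have pos: "f T > 0" using elim(1) by (meson exp_gt_zero less_le_trans)
    have "ln (f T) \<le> Cu - T * (g - \<epsilon>)" using Cu[OF T(1)] pos by (metis ln_exp ln_le_cancel_iff exp_gt_zero)
    moreover have "Cl - T * (g + \<epsilon>) \<le> ln (f T)" using elim(1) pos by (metis ln_exp ln_le_cancel_iff exp_gt_zero)
    ultimately have "\<bar>ln (f T) + T * g\<bar> \<le> 2 * \<epsilon> * T" using T by (simp add: algebra_simps abs_le_iff)
    then have "\<bar>ln (f T) / T + g\<bar> \<le> 2 * \<epsilon>"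
      using T(1) by (simp add: field_simps abs_divide abs_le_iff)
    then show ?case using e by (simp add: dist_real_def \<epsilon>_def)
  qed
qed

lemma (in finite_measure) tendsto_ln_measure_UNION:
  assumes P: "finite P" "P \<noteq> {}" and sets_E: "\<And>p T. p \<in> P \<Longrightarrow> E p T \<in> sets M"
    and up: "\<And>p \<epsilon>. p \<in> P \<Longrightarrow> \<epsilon> > 0 \<Longrightarrow> decays_at_least (\<lambda>T. measure M (E p T)) (g p - \<epsilon>)"
    and low: "\<And>p \<epsilon>. p \<in> P \<Longrightarrow> \<epsilon> > 0 \<Longrightarrow> decays_at_most (\<lambda>T. measure M (E p T)) (g p + \<epsilon>)"
  shows "((\<lambda>T. ln (measure M (\<Union>p\<in>P. E p T)) / T) \<longlongrightarrow> - Min (g ` P)) at_top"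
proof (rule tendsto_ln_div_of_decays)
  fix \<epsilon> :: real assume \<epsilon>: "\<epsilon> > 0"
  have "decays_at_least (\<lambda>T. measure M (E p T)) (Min (g ` P) - \<epsilon>)" if p: "p \<in> P" for p
    using up[OF p \<epsilon>] by (rule decays_at_least_mono) (use P p in simp_all)
  then have "decays_at_least (\<lambda>T. \<Sum>p\<in>P. measure M (E p T)) (Min (g ` P) - \<epsilon>)"
    by (rule decays_at_least_sum[OF P(1)])
  then show "decays_at_least (\<lambda>T. measure M (\<Union>p\<in>P. E p T)) (Min (g ` P) - \<epsilon>)"
  proof (rule decays_at_least_mono[OF _ order_refl])
    show "measure M (\<Union>p\<in>P. E p T) \<le> (\<Sum>p\<in>P. measure M (E p T))" for T
      using sets_E by (intro measure_UNION_le P(1)) blast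
  qed
  have "Min (g ` P) \<in> g ` P" using P by (intro Min_in) auto
  then obtain p where p: "p \<in> P" "g p = Min (g ` P)" by (metis imageE)
  have "decays_at_most (\<lambda>T. measure M (E p T)) (Min (g ` P) + \<epsilon>)"
    using low[OF p(1) \<epsilon>] p(2) by simp
  then show "decays_at_most (\<lambda>T. measure M (\<Union>p\<in>P. E p T)) (Min (g ` P) + \<epsilon>)"
  proof (rule decays_at_most_mono[OF _ order_refl])
    have "measure M (E p T) \<le> measure M (\<Union>p\<in>P. E p T)" for T
      using p(1) sets_E P(1) by (intro finite_measure_mono sets.finite_UN) auto
    then show "\<forall>\<^sub>F T in at_top. measure M (E p T) \<le> measure M (\<Union>p\<in>P. E p T)" by simp
  qed
qed

section \<open>The moment generating function of a real random variable\<close>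

locale real_rv = prob_space M for M :: "'a measure" +
  fixes Y :: "'a \<Rightarrow> real"
  assumes borel_measurable_Y [measurable]: "Y \<in> borel_measurable M"
    and integrable_Y: "integrable M Y"
begin

definition mgf_domain :: "real set" where
  "mgf_domain = {\<theta>. integrable M (\<lambda>\<omega>. exp (\<theta> * Y \<omega>))}"

definition mgf :: "real \<Rightarrow> real" where
  "mgf \<theta> = (\<integral>\<omega>. exp (\<theta> * Y \<omega>) \<partial>M)"

definition mgf_deriv :: "real \<Rightarrow> real" where
  "mgf_deriv \<theta> = (\<integral>\<omega>. Y \<omega> * exp (\<theta> * Y \<omega>) \<partial>M)"

definition log_mgf :: "real \<Rightarrow> real" where
  "log_mgf \<theta> = ln (mgf \<theta>)"

definition tilted_mean :: "real \<Rightarrow> real" where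
  "tilted_mean \<theta> = mgf_deriv \<theta> / mgf \<theta>"

text \<open>For independent copies of \<open>Y\<close>, this is the limit \<open>\<Lambda>\<close> of Assumption 1.\<close>

definition cgf :: "real \<Rightarrow> ereal" where
  "cgf \<theta> = (if \<theta> \<in> mgf_domain then ereal (log_mgf \<theta>) else \<infinity>)"

lemma zero_in_mgf_domain: "0 \<in> mgf_domain"
  by (simp add: mgf_domain_def)

lemma mgf_0: "mgf 0 = 1"
  by (simp add: mgf_def prob_space)

lemma log_mgf_0: "log_mgf 0 = 0"
  by (simp add: log_mgf_def mgf_0)

lemma mgf_deriv_0: "mgf_deriv 0 = expectation Y"
  by (simp add: mgf_deriv_def)

lemma nn_integral_exp_mult:
  "(\<integral>\<^sup>+\<omega>. ennreal (exp (\<theta> * Y \<omega>)) \<partial>M) = (if \<theta> \<in> mgf_domain then ennreal (mgf \<theta>) else \<top>)"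
proof (cases "\<theta> \<in> mgf_domain")
  case True
  then show ?thesis unfolding mgf_def mgf_domain_def by (simp add: nn_integral_eq_integral)
next
  case False
  have "(\<integral>\<^sup>+\<omega>. ennreal (exp (\<theta> * Y \<omega>)) \<partial>M) = \<top>"
  proof (rule ccontr)
    assume "(\<integral>\<^sup>+\<omega>. ennreal (exp (\<theta> * Y \<omega>)) \<partial>M) \<noteq> \<top>"
    then have "integrable M (\<lambda>\<omega>. exp (\<theta> * Y \<omega>))"
      by (intro integrableI_nonneg) (auto simp: top.not_eq_extremum)
    then show False using False by (simp add: mgf_domain_def)
  qed
  then show ?thesis using False by simp
qed

text \<open>Integrating \<open>e\<^sup>u \<ge> 1 + u\<close> at \<open>u = (\<theta> - \<eta>) (Y - c)\<close> against the tilted measure.\<close>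

lemma mgf_ge_tangent:
  assumes \<theta>: "\<theta> \<in> mgf_domain" and \<eta>: "\<eta> \<in> mgf_domain"
    and int: "integrable M (\<lambda>\<omega>. Y \<omega> * exp (\<eta> * Y \<omega>))"
  shows "exp ((\<theta> - \<eta>) * c) * (mgf \<eta> + (\<theta> - \<eta>) * (mgf_deriv \<eta> - c * mgf \<eta>)) \<le> mgf \<theta>"
proof -
  have pointwise: "exp ((\<theta> - \<eta>) * c) * (exp (\<eta> * x) + (\<theta> - \<eta>) * (x * exp (\<eta> * x) - c * exp (\<eta> * x)))
      \<le> exp (\<theta> * x)" for x
  proof -
    have "exp ((\<theta> - \<eta>) * c) * exp (\<eta> * x) * (1 + (\<theta> - \<eta>) * (x - c))
         \<le> exp ((\<theta> - \<eta>) * c) * exp (\<eta> * x) * exp ((\<theta> - \<eta>) * (x - c))"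
      by (intro mult_left_mono exp_ge_add_one_self) auto
    also have "\<dots> = exp (\<theta> * x)" by (simp add: exp_add[symmetric] algebra_simps)
    finally show ?thesis by (simp add: algebra_simps)
  qed
  have "exp ((\<theta> - \<eta>) * c) * (mgf \<eta> + (\<theta> - \<eta>) * (mgf_deriv \<eta> - c * mgf \<eta>))
      = (\<integral>\<omega>. exp ((\<theta> - \<eta>) * c) * (exp (\<eta> * Y \<omega>) + (\<theta> - \<eta>) * (Y \<omega> * exp (\<eta> * Y \<omega>) - c * exp (\<eta> * Y \<omega>))) \<partial>M)"
    using \<eta> int by (simp add: mgf_def mgf_deriv_def mgf_domain_def)
  also have "\<dots> \<le> mgf \<theta>"
    unfolding mgf_def using \<eta> int \<theta> pointwise by (intro integral_mono) (auto simp: mgf_domain_def)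
  finally show ?thesis .
qed

lemma mgf_ge_exp_mean: "\<theta> \<in> mgf_domain \<Longrightarrow> exp (\<theta> * expectation Y) \<le> mgf \<theta>"
  using mgf_ge_tangent[OF _ zero_in_mgf_domain, of \<theta> "expectation Y"] integrable_Y
  by (simp add: mgf_0 mgf_deriv_0)

lemma mgf_pos: "\<theta> \<in> mgf_domain \<Longrightarrow> 0 < mgf \<theta>"
  using mgf_ge_exp_mean by (meson exp_gt_zero less_le_trans)

lemma log_mgf_ge_mean: "\<theta> \<in> mgf_domain \<Longrightarrow> \<theta> * expectation Y \<le> log_mgf \<theta>"
  using mgf_ge_exp_mean mgf_pos unfolding log_mgf_def by (metis ln_exp ln_le_cancel_iff exp_gt_zero)

lemma integrable_exp_mult_exp_abs:
  assumes "e + d \<in> mgf_domain" and "e - d \<in> mgf_domain"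
  shows "integrable M (\<lambda>\<omega>. exp (e * Y \<omega>) * exp (d * \<bar>Y \<omega>\<bar>))"
proof (rule Bochner_Integration.integrable_bound)
  show "integrable M (\<lambda>\<omega>. exp ((e + d) * Y \<omega>) + exp ((e - d) * Y \<omega>))"
    using assms by (auto simp: mgf_domain_def)
  show "AE \<omega> in M. norm (exp (e * Y \<omega>) * exp (d * \<bar>Y \<omega>\<bar>))
      \<le> norm (exp ((e + d) * Y \<omega>) + exp ((e - d) * Y \<omega>))"
    using exp_mult_exp_abs_le by (intro AE_I2) (simp add: abs_mult)
qed auto

lemma integrable_Y_mult_exp:
  assumes d: "d > 0" and "e + d \<in> mgf_domain" and "e - d \<in> mgf_domain"
  shows "integrable M (\<lambda>\<omega>. Y \<omega> * exp (e * Y \<omega>))"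
proof (rule Bochner_Integration.integrable_bound)
  show "integrable M (\<lambda>\<omega>. (1 / d) * (exp (e * Y \<omega>) * exp (d * \<bar>Y \<omega>\<bar>)))"
    using integrable_exp_mult_exp_abs[OF assms(2,3)] by simp
  have "\<bar>x * exp (e * x)\<bar> \<le> (1 / d) * (exp (e * x) * exp (d * \<bar>x\<bar>))" for x
  proof -
    have "d * \<bar>x\<bar> \<le> exp (d * \<bar>x\<bar>)"
      using exp_ge_add_one_self[of "d * \<bar>x\<bar>"] by linarith
    then have "\<bar>x\<bar> \<le> (1 / d) * exp (d * \<bar>x\<bar>)"
      using d by (simp add: field_simps)
    then have "\<bar>x\<bar> * exp (e * x) \<le> (1 / d) * exp (d * \<bar>x\<bar>) * exp (e * x)"
      by (intro mult_right_mono) auto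
    then show ?thesis by (simp add: abs_mult algebra_simps)
  qed
  then show "AE \<omega> in M. norm (Y \<omega> * exp (e * Y \<omega>)) \<le> norm ((1 / d) * (exp (e * Y \<omega>) * exp (d * \<bar>Y \<omega>\<bar>)))"
    using d by (intro AE_I2) (simp add: abs_mult)
qed auto

lemma mgf_second_order_bound:
  assumes d: "d > 0" and ball: "\<And>h. \<bar>h\<bar> \<le> 2 * d \<Longrightarrow> e + h \<in> mgf_domain" and h: "\<bar>h\<bar> \<le> d"
  shows "\<bar>mgf (e + h) - mgf e - h * mgf_deriv e\<bar>
          \<le> h\<^sup>2 * (2 / d\<^sup>2 * (\<integral>\<omega>. exp (e * Y \<omega>) * exp ((2 * d) * \<bar>Y \<omega>\<bar>) \<partial>M))"
proof -
  have "e + 2 * d \<in> mgf_domain" "e - 2 * d \<in> mgf_domain" "e + d \<in> mgf_domain" "e - d \<in> mgf_domain"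
    using ball[of "2 * d"] ball[of "- 2 * d"] ball[of d] ball[of "- d"] d by simp_all
  then have ib: "integrable M (\<lambda>\<omega>. exp (e * Y \<omega>) * exp ((2 * d) * \<bar>Y \<omega>\<bar>))"
    and ix: "integrable M (\<lambda>\<omega>. Y \<omega> * exp (e * Y \<omega>))"
    using integrable_exp_mult_exp_abs integrable_Y_mult_exp[OF d] by blast+
  have ieh: "integrable M (\<lambda>\<omega>. exp ((e + h) * Y \<omega>))" and ie: "integrable M (\<lambda>\<omega>. exp (e * Y \<omega>))"
    using ball[of h] ball[of 0] h d by (simp_all add: mgf_domain_def)
  have eq: "mgf (e + h) - mgf e - h * mgf_deriv e
      = (\<integral>\<omega>. exp ((e + h) * Y \<omega>) - exp (e * Y \<omega>) - h * (Y \<omega> * exp (e * Y \<omega>)) \<partial>M)"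
    unfolding mgf_def mgf_deriv_def
    by (subst Bochner_Integration.integral_diff,
        (intro Bochner_Integration.integrable_diff ieh ie integrable_mult_right ix)+,
        subst Bochner_Integration.integral_diff, (intro ieh ie)+) simp
  have "\<bar>(\<integral>\<omega>. exp ((e + h) * Y \<omega>) - exp (e * Y \<omega>) - h * (Y \<omega> * exp (e * Y \<omega>)) \<partial>M)\<bar>
      \<le> (\<integral>\<omega>. \<bar>exp ((e + h) * Y \<omega>) - exp (e * Y \<omega>) - h * (Y \<omega> * exp (e * Y \<omega>))\<bar> \<partial>M)"
    by (rule integral_abs_bound)
  also have "\<dots> \<le> (\<integral>\<omega>. h\<^sup>2 * (2 / d\<^sup>2 * (exp (e * Y \<omega>) * exp ((2 * d) * \<bar>Y \<omega>\<bar>))) \<partial>M)"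
  proof (rule integral_mono)
    show "integrable M (\<lambda>\<omega>. h\<^sup>2 * (2 / d\<^sup>2 * (exp (e * Y \<omega>) * exp ((2 * d) * \<bar>Y \<omega>\<bar>))))"
      using ib by simp
    show "integrable M (\<lambda>\<omega>. \<bar>exp ((e + h) * Y \<omega>) - exp (e * Y \<omega>) - h * (Y \<omega> * exp (e * Y \<omega>))\<bar>)"
      by (intro integrable_abs Bochner_Integration.integrable_diff ieh ie integrable_mult_right ix)
  qed (rule abs_exp_second_order_le[OF d h])
  also have "\<dots> = h\<^sup>2 * (2 / d\<^sup>2 * (\<integral>\<omega>. exp (e * Y \<omega>) * exp ((2 * d) * \<bar>Y \<omega>\<bar>) \<partial>M))"
    by simp
  finally show ?thesis unfolding eq .
qed

lemma mgf_second_order_bound_near: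
  assumes e: "e \<in> interior mgf_domain"
  obtains d K where "d > 0" "K \<ge> 0" "\<And>h. \<bar>h\<bar> \<le> d \<Longrightarrow> e + h \<in> mgf_domain"
    "\<And>h. \<bar>h\<bar> \<le> d \<Longrightarrow> \<bar>mgf (e + h) - mgf e - h * mgf_deriv e\<bar> \<le> h\<^sup>2 * K"
proof -
  obtain r where r: "r > 0" "ball e r \<subseteq> mgf_domain" using e mem_interior by blast
  define d where "d = r / 3"
  have d: "d > 0" using r by (simp add: d_def)
  have ball: "e + h \<in> mgf_domain" if "\<bar>h\<bar> \<le> 2 * d" for h
    using that r unfolding d_def by (intro subsetD[OF r(2)]) (auto simp: dist_real_def)
  define K where "K = 2 / d\<^sup>2 * (\<integral>\<omega>. exp (e * Y \<omega>) * exp ((2 * d) * \<bar>Y \<omega>\<bar>) \<partial>M)"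
  have "K \<ge> 0" unfolding K_def by (intro mult_nonneg_nonneg integral_nonneg) auto
  moreover have "e + h \<in> mgf_domain" if "\<bar>h\<bar> \<le> d" for h
    using ball that d by simp
  moreover have "\<bar>mgf (e + h) - mgf e - h * mgf_deriv e\<bar> \<le> h\<^sup>2 * K" if "\<bar>h\<bar> \<le> d" for h
    unfolding K_def by (rule mgf_second_order_bound[OF d ball that])
  ultimately show ?thesis by (rule that[OF d])
qed

lemma mgf_has_derivative:
  assumes e: "e \<in> interior mgf_domain"
  shows "(mgf has_real_derivative mgf_deriv e) (at e)"
proof -
  obtain d K where d: "d > 0" and "K \<ge> 0" and "\<And>h. \<bar>h\<bar> \<le> d \<Longrightarrow> e + h \<in> mgf_domain"
    and quad: "\<And>h. \<bar>h\<bar> \<le> d \<Longrightarrow> \<bar>mgf (e + h) - mgf e - h * mgf_deriv e\<bar> \<le> h\<^sup>2 * K"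
    using mgf_second_order_bound_near[OF e] by blast
  have "((\<lambda>h. (mgf (e + h) - mgf e) / h - mgf_deriv e) \<longlongrightarrow> 0) (at 0)"
  proof (rule Lim_null_comparison)
    show "((\<lambda>h. \<bar>h\<bar> * K) \<longlongrightarrow> 0) (at 0)"
      by (intro tendsto_mult_left_zero tendsto_rabs_zero tendsto_ident_at)
    show "\<forall>\<^sub>F h in at 0. norm ((mgf (e + h) - mgf e) / h - mgf_deriv e) \<le> \<bar>h\<bar> * K"
      unfolding eventually_at
    proof (intro exI[of _ d] conjI ballI impI)
      fix h :: real assume h: "h \<noteq> 0 \<and> dist h 0 < d"
      have "(mgf (e + h) - mgf e) / h - mgf_deriv e = (mgf (e + h) - mgf e - h * mgf_deriv e) / h"
        using h by (simp add: field_simps)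
      then have "norm ((mgf (e + h) - mgf e) / h - mgf_deriv e) = \<bar>mgf (e + h) - mgf e - h * mgf_deriv e\<bar> / \<bar>h\<bar>"
        by simp
      also have "\<dots> \<le> h\<^sup>2 * K / \<bar>h\<bar>"
        using quad[of h] h by (intro divide_right_mono) auto
      also have "\<dots> = \<bar>h\<bar> * K"
      proof -
        have "h\<^sup>2 = \<bar>h\<bar> * \<bar>h\<bar>" by (simp add: power2_eq_square)
        moreover have "\<bar>h\<bar> \<noteq> 0" using h by simp
        ultimately show ?thesis by (metis mult.assoc nonzero_mult_div_cancel_left)
      qed
      finally show "norm ((mgf (e + h) - mgf e) / h - mgf_deriv e) \<le> \<bar>h\<bar> * K" .
    qed (use d in auto)
  qed
  then show ?thesis unfolding DERIV_def by (subst Lim_null) simp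
qed

lemma log_mgf_has_derivative:
  assumes e: "e \<in> interior mgf_domain"
  shows "(log_mgf has_real_derivative tilted_mean e) (at e)"
proof -
  have "mgf e > 0" using mgf_pos e interior_subset by blast
  from DERIV_chain2[OF DERIV_ln_divide[OF this] mgf_has_derivative[OF e]]
  show ?thesis by (simp add: log_mgf_def[abs_def] tilted_mean_def)
qed

lemma edom_cgf: "edom cgf = mgf_domain"
  by (auto simp: edom_def cgf_def)

lemma Fset_cgf: "Fset cgf = tilted_mean ` interior mgf_domain"
proof -
  have "deriv (rpart cgf) e = tilted_mean e" if e: "e \<in> interior mgf_domain" for e
  proof (rule DERIV_imp_deriv, rule has_field_derivative_transform_within_open)
    show "(log_mgf has_real_derivative tilted_mean e) (at e)" by (rule log_mgf_has_derivative[OF e])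
    show "log_mgf x = rpart cgf x" if "x \<in> interior mgf_domain" for x
      using that interior_subset by (auto simp: rpart_def cgf_def)
  qed (use e in auto)
  then show ?thesis unfolding Fset_def edom_cgf by (simp cong: image_cong)
qed

lemma legendre_cgf_ge: "\<theta> \<in> mgf_domain \<Longrightarrow> ereal (\<theta> * x - log_mgf \<theta>) \<le> legendre cgf x"
  unfolding legendre_def by (rule SUP_upper2[of \<theta>]) (auto simp: cgf_def)

lemma legendre_cgf_le:
  assumes "\<And>\<theta>. \<theta> \<in> mgf_domain \<Longrightarrow> ereal (\<theta> * x - log_mgf \<theta>) \<le> Q"
  shows "legendre cgf x \<le> Q"
  unfolding legendre_def
proof (rule SUP_least)
  fix \<theta> :: real
  show "ereal (\<theta> * x) - cgf \<theta> \<le> Q"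
    using assms[of \<theta>] by (cases "\<theta> \<in> mgf_domain") (auto simp: cgf_def)
qed

lemma legendre_cgf_nonneg: "0 \<le> legendre cgf x"
  using legendre_cgf_ge[OF zero_in_mgf_domain, of x] by (simp add: log_mgf_0 zero_ereal_def)

lemma legendre_cgf_mean: "legendre cgf (expectation Y) = 0"
proof -
  have "legendre cgf (expectation Y) \<le> 0"
    by (rule legendre_cgf_le) (use log_mgf_ge_mean in \<open>simp add: mult.commute zero_ereal_def\<close>)
  then show ?thesis using legendre_cgf_nonneg by (simp add: order_antisym)
qed

lemma legendre_cgf_approx:
  assumes "legendre cgf x = ereal v" and "\<epsilon> > 0"
  obtains \<theta> where "\<theta> \<in> mgf_domain" "v - \<epsilon> < \<theta> * x - log_mgf \<theta>"
proof -
  have "\<not> legendre cgf x \<le> ereal (v - \<epsilon>)" using assms by simp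
  then obtain \<theta> where "\<theta> \<in> mgf_domain" "\<not> ereal (\<theta> * x - log_mgf \<theta>) \<le> ereal (v - \<epsilon>)"
    using legendre_cgf_le by blast
  then show ?thesis using that by simp
qed

text \<open>The supremum defining the Legendre transform at \<open>tilted_mean e\<close> is attained at \<open>e\<close>,
  by convexity of \<open>log_mgf\<close> (the tilted mean is its derivative).\<close>

lemma legendre_objective_le_at_tilt:
  assumes e: "e \<in> interior mgf_domain" and \<theta>: "\<theta> \<in> mgf_domain"
  shows "\<theta> * tilted_mean e - log_mgf \<theta> \<le> e * tilted_mean e - log_mgf e"
proof -
  obtain r where r: "r > 0" "ball e r \<subseteq> mgf_domain" using e mem_interior by blast
  have "e + r/2 \<in> mgf_domain" "e - r/2 \<in> mgf_domain"
    using r by (auto intro!: subsetD[OF r(2)] simp: dist_real_def)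
  then have int: "integrable M (\<lambda>\<omega>. Y \<omega> * exp (e * Y \<omega>))"
    by (rule integrable_Y_mult_exp[rotated]) (use r in simp)
  have eD: "e \<in> mgf_domain" using e interior_subset by blast
  have pos: "mgf e > 0" "mgf \<theta> > 0" using mgf_pos eD \<theta> by auto
  have "exp ((\<theta> - e) * tilted_mean e) * mgf e \<le> mgf \<theta>"
    using mgf_ge_tangent[OF \<theta> eD int, of "tilted_mean e"] pos by (simp add: tilted_mean_def)
  then have "ln (exp ((\<theta> - e) * tilted_mean e) * mgf e) \<le> log_mgf \<theta>"
    unfolding log_mgf_def using pos by (subst ln_le_cancel_iff) auto
  then show ?thesis using pos by (simp add: ln_mult log_mgf_def algebra_simps)
qed

lemma legendre_cgf_tilted_mean:
  assumes e: "e \<in> interior mgf_domain"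
  shows "legendre cgf (tilted_mean e) = ereal (e * tilted_mean e - log_mgf e)"
proof (rule antisym)
  show "legendre cgf (tilted_mean e) \<le> ereal (e * tilted_mean e - log_mgf e)"
    using legendre_objective_le_at_tilt[OF e] by (intro legendre_cgf_le) simp
  show "ereal (e * tilted_mean e - log_mgf e) \<le> legendre cgf (tilted_mean e)"
    using e interior_subset by (intro legendre_cgf_ge) blast
qed

text \<open>Only tilts on the side of the mean matter, since \<open>\<theta> * expectation Y \<le> log_mgf \<theta>\<close>.\<close>

lemma legendre_cgf_mono_above_mean:
  assumes "expectation Y \<le> y" "y \<le> x"
  shows "legendre cgf y \<le> legendre cgf x"
proof (rule legendre_cgf_le)
  fix \<theta> assume \<theta>: "\<theta> \<in> mgf_domain"
  show "ereal (\<theta> * y - log_mgf \<theta>) \<le> legendre cgf x"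
  proof (cases "\<theta> \<ge> 0")
    case True
    then have "\<theta> * y - log_mgf \<theta> \<le> \<theta> * x - log_mgf \<theta>" using assms by (simp add: mult_left_mono)
    then show ?thesis using legendre_cgf_ge[OF \<theta>, of x] by (metis ereal_less_eq(3) order_trans)
  next
    case False
    then have "\<theta> * y \<le> \<theta> * expectation Y" using assms by (simp add: mult_left_mono_neg)
    then have "ereal (\<theta> * y - log_mgf \<theta>) \<le> 0"
      using log_mgf_ge_mean[OF \<theta>] by (simp add: mult.commute zero_ereal_def)
    then show ?thesis using legendre_cgf_nonneg order_trans by blast
  qed
qed

lemma legendre_cgf_mono_below_mean:
  assumes "y \<le> expectation Y" "x \<le> y"
  shows "legendre cgf y \<le> legendre cgf x"
proof (rule legendre_cgf_le)
  fix \<theta> assume \<theta>: "\<theta> \<in> mgf_domain"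
  show "ereal (\<theta> * y - log_mgf \<theta>) \<le> legendre cgf x"
  proof (cases "\<theta> \<le> 0")
    case True
    then have "\<theta> * y - log_mgf \<theta> \<le> \<theta> * x - log_mgf \<theta>" using assms by (simp add: mult_left_mono_neg)
    then show ?thesis using legendre_cgf_ge[OF \<theta>, of x] by (metis ereal_less_eq(3) order_trans)
  next
    case False
    then have "\<theta> * y \<le> \<theta> * expectation Y" using assms by (simp add: mult_left_mono)
    then have "ereal (\<theta> * y - log_mgf \<theta>) \<le> 0"
      using log_mgf_ge_mean[OF \<theta>] by (simp add: mult.commute zero_ereal_def)
    then show ?thesis using legendre_cgf_nonneg order_trans by blast
  qed
qed

text \<open>Only meaningful where the Legendre transform is finite: \<open>real_of_ereal\<close> sends \<open>\<infinity>\<close> to \<open>0\<close>.\<close>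

definition rate :: "real \<Rightarrow> real" where
  "rate x = real_of_ereal (legendre cgf x)"

lemma rate_nonneg: "0 \<le> rate x"
  using legendre_cgf_nonneg[of x] by (cases "legendre cgf x") (auto simp: rate_def)

lemma rate_mean: "rate (expectation Y) = 0"
  by (simp add: rate_def legendre_cgf_mean)

lemma rate_tilted_mean:
  "e \<in> interior mgf_domain \<Longrightarrow> rate (tilted_mean e) = e * tilted_mean e - log_mgf e"
  by (simp add: rate_def legendre_cgf_tilted_mean)

text \<open>Coercivity makes \<open>rate\<close> finite near \<open>[a, b]\<close> and Lipschitz there, with constant \<open>(A + 1) / d\<close>.\<close>

definition legendre_coercive :: "real \<Rightarrow> real \<Rightarrow> real \<Rightarrow> real \<Rightarrow> bool" where
  "legendre_coercive a b A d \<longleftrightarrow> d > 0 \<and>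
     (\<forall>\<theta>\<in>mgf_domain. \<forall>x\<in>{a - d..b + d}. \<theta> * x - log_mgf \<theta> \<le> A - d * \<bar>\<theta>\<bar>)"

lemma tilted_means_near:
  assumes "x \<in> interior (tilted_mean ` interior mgf_domain)"
  obtains \<epsilon> where "\<epsilon> > 0" "\<And>\<delta>. \<bar>\<delta>\<bar> \<le> \<epsilon> \<Longrightarrow> \<exists>\<theta>\<in>interior mgf_domain. tilted_mean \<theta> = x + \<delta>"
proof -
  obtain e where e: "e > 0" "ball x e \<subseteq> tilted_mean ` interior mgf_domain"
    using assms mem_interior by (metis interior_subset subset_trans)
  have "x + \<delta> \<in> tilted_mean ` interior mgf_domain" if "\<bar>\<delta>\<bar> \<le> e / 2" for \<delta>
    using that e by (intro subsetD[OF e(2)]) (simp add: dist_real_def)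
  then show ?thesis using that[of "e / 2"] e(1) by (metis half_gt_zero imageE)
qed

lemma legendre_objective_le_left:
  assumes e: "e \<in> interior mgf_domain" and \<theta>: "\<theta> \<in> mgf_domain" "\<theta> \<le> 0"
    and x: "tilted_mean e + d \<le> x"
  shows "\<theta> * x - log_mgf \<theta> \<le> (e * tilted_mean e - log_mgf e) - d * \<bar>\<theta>\<bar>"
proof -
  have "\<theta> * (x - tilted_mean e) \<le> \<theta> * d" using \<theta>(2) x by (intro mult_left_mono_neg) auto
  then show ?thesis using legendre_objective_le_at_tilt[OF e \<theta>(1)] \<theta>(2) by (simp add: algebra_simps)
qed

lemma legendre_objective_le_right:
  assumes e: "e \<in> interior mgf_domain" and \<theta>: "\<theta> \<in> mgf_domain" "0 \<le> \<theta>"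
    and x: "x + d \<le> tilted_mean e"
  shows "\<theta> * x - log_mgf \<theta> \<le> (e * tilted_mean e - log_mgf e) - d * \<bar>\<theta>\<bar>"
proof -
  have "\<theta> * (x - tilted_mean e) \<le> \<theta> * (- d)" using \<theta>(2) x by (intro mult_left_mono) auto
  then show ?thesis using legendre_objective_le_at_tilt[OF e \<theta>(1)] \<theta>(2) by (simp add: algebra_simps)
qed

text \<open>The constants come from tilts whose means lie just outside \<open>[a, b]\<close>: negative tilts are
  controlled by the tangent at the left one, positive tilts by the tangent at the right one.\<close>

lemma legendre_coercive_exists:
  assumes ab: "a \<le> b" and sub: "{a..b} \<subseteq> interior (tilted_mean ` interior mgf_domain)"
  obtains A d where "legendre_coercive a b A d"
proof -
  have "a \<in> interior (tilted_mean ` interior mgf_domain)" "b \<in> interior (tilted_mean ` interior mgf_domain)"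
    using sub ab by auto
  then obtain e\<^sub>a e\<^sub>b where
    e\<^sub>a: "e\<^sub>a > 0" "\<And>\<delta>. \<bar>\<delta>\<bar> \<le> e\<^sub>a \<Longrightarrow> \<exists>\<theta>\<in>interior mgf_domain. tilted_mean \<theta> = a + \<delta>" and
    e\<^sub>b: "e\<^sub>b > 0" "\<And>\<delta>. \<bar>\<delta>\<bar> \<le> e\<^sub>b \<Longrightarrow> \<exists>\<theta>\<in>interior mgf_domain. tilted_mean \<theta> = b + \<delta>"
    by (metis tilted_means_near)
  obtain \<theta>\<^sub>a \<theta>\<^sub>b where \<theta>\<^sub>a: "\<theta>\<^sub>a \<in> interior mgf_domain" "tilted_mean \<theta>\<^sub>a = a - e\<^sub>a"
    and \<theta>\<^sub>b: "\<theta>\<^sub>b \<in> interior mgf_domain" "tilted_mean \<theta>\<^sub>b = b + e\<^sub>b"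
    using e\<^sub>a(2)[of "- e\<^sub>a"] e\<^sub>b(2)[of e\<^sub>b] e\<^sub>a(1) e\<^sub>b(1) by auto
  define d where "d = min e\<^sub>a e\<^sub>b / 2"
  define A where "A = max (\<theta>\<^sub>a * tilted_mean \<theta>\<^sub>a - log_mgf \<theta>\<^sub>a) (\<theta>\<^sub>b * tilted_mean \<theta>\<^sub>b - log_mgf \<theta>\<^sub>b)"
  have d: "d > 0" "d \<le> e\<^sub>a / 2" "d \<le> e\<^sub>b / 2" using e\<^sub>a(1) e\<^sub>b(1) by (auto simp: d_def)
  have "\<theta> * x - log_mgf \<theta> \<le> A - d * \<bar>\<theta>\<bar>" if "\<theta> \<in> mgf_domain" "x \<in> {a - d..b + d}" for \<theta> x
  proof (cases "\<theta> \<le> 0")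
    case True
    then show ?thesis
      using legendre_objective_le_left[OF \<theta>\<^sub>a(1) that(1) True, of d x] that(2) \<theta>\<^sub>a(2) d
      by (simp add: A_def)
  next
    case False
    then show ?thesis
      using legendre_objective_le_right[OF \<theta>\<^sub>b(1) that(1), of x d] that(2) \<theta>\<^sub>b(2) d
      by (simp add: A_def)
  qed
  then show ?thesis using d(1) by (intro that[of A d]) (simp add: legendre_coercive_def)
qed

lemma legendre_coercive_mono:
  assumes "legendre_coercive a b A d" "0 < d'" "d' \<le> d"
  shows "legendre_coercive a b A d'"
  unfolding legendre_coercive_def
proof (intro conjI ballI)
  fix \<theta> x assume "\<theta> \<in> mgf_domain" "x \<in> {a - d'..b + d'}"
  then have "\<theta> * x - log_mgf \<theta> \<le> A - d * \<bar>\<theta>\<bar>"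
    using assms unfolding legendre_coercive_def by auto
  moreover have "d' * \<bar>\<theta>\<bar> \<le> d * \<bar>\<theta>\<bar>" using assms by (simp add: mult_right_mono)
  ultimately show "\<theta> * x - log_mgf \<theta> \<le> A - d' * \<bar>\<theta>\<bar>" by linarith
qed (use assms in simp)

context
  fixes a b A d
  assumes coercive: "legendre_coercive a b A d"
begin

lemma coercive_pos: "d > 0"
  using coercive by (simp add: legendre_coercive_def)

lemma coercive_const_nonneg: "a \<le> b \<Longrightarrow> 0 \<le> A"
  using coercive zero_in_mgf_domain coercive_pos unfolding legendre_coercive_def
  by (force simp: log_mgf_0)

lemma legendre_cgf_eq_rate:
  assumes x: "x \<in> {a - d..b + d}"
  shows "legendre cgf x = ereal (rate x)"
proof -
  have "legendre cgf x \<le> ereal A"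
  proof (rule legendre_cgf_le)
    fix \<theta> assume "\<theta> \<in> mgf_domain"
    then have "\<theta> * x - log_mgf \<theta> \<le> A - d * \<bar>\<theta>\<bar>" using coercive x unfolding legendre_coercive_def by blast
    moreover have "0 \<le> d * \<bar>\<theta>\<bar>" using coercive_pos by simp
    ultimately show "ereal (\<theta> * x - log_mgf \<theta>) \<le> ereal A" by simp
  qed
  then show ?thesis using legendre_cgf_nonneg[of x] by (cases "legendre cgf x") (auto simp: rate_def)
qed

lemma rate_ge:
  "x \<in> {a - d..b + d} \<Longrightarrow> \<theta> \<in> mgf_domain \<Longrightarrow> \<theta> * x - log_mgf \<theta> \<le> rate x"
  using legendre_cgf_ge[of \<theta> x] legendre_cgf_eq_rate[of x] by simp

lemma rate_approx_nonpos:
  assumes x: "x \<in> {a - d..b + d}" and below: "x \<le> expectation Y" and \<epsilon>: "\<epsilon> > 0"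
  obtains \<theta> where "\<theta> \<in> mgf_domain" "\<theta> \<le> 0" "log_mgf \<theta> - \<theta> * x < \<epsilon> - rate x"
proof -
  obtain \<theta> where \<theta>: "\<theta> \<in> mgf_domain" "rate x - \<epsilon> < \<theta> * x - log_mgf \<theta>"
    using legendre_cgf_approx[OF legendre_cgf_eq_rate[OF x] \<epsilon>] by blast
  show ?thesis
  proof (cases "\<theta> \<le> 0")
    case True then show ?thesis using that \<theta> by simp
  next
    case False
    then have "\<theta> * x \<le> \<theta> * expectation Y" using below by (intro mult_left_mono) auto
    then have "\<theta> * x \<le> log_mgf \<theta>" using log_mgf_ge_mean[OF \<theta>(1)] by linarith
    then show ?thesis using that[OF zero_in_mgf_domain] \<theta>(2) by (simp add: log_mgf_0)
  qed
qed

lemma rate_approx_nonneg: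
  assumes x: "x \<in> {a - d..b + d}" and above: "expectation Y \<le> x" and \<epsilon>: "\<epsilon> > 0"
  obtains \<theta> where "\<theta> \<in> mgf_domain" "0 \<le> \<theta>" "log_mgf \<theta> - \<theta> * x < \<epsilon> - rate x"
proof -
  obtain \<theta> where \<theta>: "\<theta> \<in> mgf_domain" "rate x - \<epsilon> < \<theta> * x - log_mgf \<theta>"
    using legendre_cgf_approx[OF legendre_cgf_eq_rate[OF x] \<epsilon>] by blast
  show ?thesis
  proof (cases "0 \<le> \<theta>")
    case True then show ?thesis using that \<theta> by simp
  next
    case False
    then have "\<theta> * x \<le> \<theta> * expectation Y" using above by (intro mult_left_mono_neg) auto
    then have "\<theta> * x \<le> log_mgf \<theta>" using log_mgf_ge_mean[OF \<theta>(1)] by linarith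
    then show ?thesis using that[OF zero_in_mgf_domain] \<theta>(2) by (simp add: log_mgf_0)
  qed
qed

text \<open>A near-optimal tilt at \<open>x\<close> has \<open>\<bar>\<theta>\<bar> \<le> (A + 1) / d\<close> by coercivity, and it is a competitor at \<open>y\<close>.\<close>

lemma rate_lipschitz:
  assumes x: "x \<in> {a - d..b + d}" and y: "y \<in> {a - d..b + d}"
  shows "rate x - (A + 1) / d * \<bar>y - x\<bar> \<le> rate y"
proof (rule field_le_epsilon)
  fix \<epsilon> :: real assume "\<epsilon> > 0"
  then have \<epsilon>': "min \<epsilon> 1 > 0" by simp
  obtain \<theta> where \<theta>: "\<theta> \<in> mgf_domain" "rate x - min \<epsilon> 1 < \<theta> * x - log_mgf \<theta>"
    using legendre_cgf_approx[OF legendre_cgf_eq_rate[OF x] \<epsilon>'] by blast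
  have "\<theta> * x - log_mgf \<theta> \<le> A - d * \<bar>\<theta>\<bar>" using coercive x \<theta>(1) unfolding legendre_coercive_def by blast
  then have "d * \<bar>\<theta>\<bar> \<le> A + 1" using \<theta>(2) rate_nonneg[of x] by linarith
  then have "\<bar>\<theta>\<bar> * \<bar>y - x\<bar> \<le> (A + 1) / d * \<bar>y - x\<bar>"
    using coercive_pos by (intro mult_right_mono) (simp_all add: field_simps)
  moreover have "- (\<bar>\<theta>\<bar> * \<bar>y - x\<bar>) \<le> \<theta> * (y - x)"
    by (metis abs_ge_minus_self abs_mult minus_le_iff)
  moreover have "\<theta> * y - log_mgf \<theta> = (\<theta> * x - log_mgf \<theta>) + \<theta> * (y - x)" by (simp add: algebra_simps)
  ultimately show "rate x - (A + 1) / d * \<bar>y - x\<bar> \<le> rate y + \<epsilon>"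
    using rate_ge[OF y \<theta>(1)] \<theta>(2) by linarith
qed

end

lemma log_mgf_second_order_bound_near:
  assumes e: "e \<in> interior mgf_domain"
  obtains d K where "d > 0" "K \<ge> 0" "\<And>h. \<bar>h\<bar> \<le> d \<Longrightarrow> e + h \<in> mgf_domain"
    "\<And>h. \<bar>h\<bar> \<le> d \<Longrightarrow> log_mgf (e + h) - log_mgf e - h * tilted_mean e \<le> K * h\<^sup>2"
proof -
  obtain d K where d: "d > 0" and K: "K \<ge> 0" and dom: "\<And>h. \<bar>h\<bar> \<le> d \<Longrightarrow> e + h \<in> mgf_domain"
    and quad: "\<And>h. \<bar>h\<bar> \<le> d \<Longrightarrow> \<bar>mgf (e + h) - mgf e - h * mgf_deriv e\<bar> \<le> h\<^sup>2 * K"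
    using mgf_second_order_bound_near[OF e] by blast
  have pe: "mgf e > 0" using mgf_pos e interior_subset by blast
  have "log_mgf (e + h) - log_mgf e - h * tilted_mean e \<le> K / mgf e * h\<^sup>2" if h: "\<bar>h\<bar> \<le> d" for h
  proof -
    define u where "u = h * tilted_mean e + K / mgf e * h\<^sup>2"
    have "mgf (e + h) \<le> mgf e + h * mgf_deriv e + h\<^sup>2 * K" using quad[OF h] by linarith
    also have "\<dots> = mgf e * (1 + u)" using pe by (simp add: u_def tilted_mean_def field_simps)
    finally have le: "mgf (e + h) \<le> mgf e * (1 + u)" .
    moreover have ph: "mgf (e + h) > 0" using mgf_pos dom[OF h] by blast
    ultimately have "0 < mgf e * (1 + u)" by linarith
    then have pos: "1 + u > 0" using pe by (simp add: zero_less_mult_iff)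
    have "log_mgf (e + h) \<le> ln (mgf e * (1 + u))"
      unfolding log_mgf_def using ph le by (subst ln_le_cancel_iff) (auto simp: pos pe)
    also have "\<dots> = log_mgf e + ln (1 + u)" using pe pos by (simp add: ln_mult log_mgf_def)
    also have "\<dots> \<le> log_mgf e + u" using ln_le_minus_one[OF pos] by simp
    finally show ?thesis by (simp add: u_def)
  qed
  moreover have "K / mgf e \<ge> 0" using K pe by simp
  ultimately show ?thesis using that[OF d] dom by blast
qed

text \<open>The linear gain \<open>h \<rho>\<close> beats the quadratic remainder of \<open>log_mgf\<close> at \<open>e\<close> once \<open>h\<close> is small.\<close>

lemma log_mgf_tilt_gain:
  assumes e: "e \<in> interior mgf_domain" and \<rho>: "\<rho> > 0"
  obtains h\<^sub>0 where "h\<^sub>0 > 0" and "\<And>h. 0 < h \<Longrightarrow> h \<le> h\<^sub>0 \<Longrightarrow> e + h \<in> mgf_domain \<and> e - h \<in> mgf_domain \<and>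
     log_mgf (e + h) - log_mgf e - h * (tilted_mean e + \<rho>) \<le> - (h * \<rho> / 2) \<and>
     log_mgf (e - h) - log_mgf e + h * (tilted_mean e - \<rho>) \<le> - (h * \<rho> / 2)"
proof -
  obtain d K where d: "d > 0" and K: "K \<ge> 0" and dom: "\<And>h. \<bar>h\<bar> \<le> d \<Longrightarrow> e + h \<in> mgf_domain"
    and q: "\<And>h. \<bar>h\<bar> \<le> d \<Longrightarrow> log_mgf (e + h) - log_mgf e - h * tilted_mean e \<le> K * h\<^sup>2"
    using log_mgf_second_order_bound_near[OF e] by blast
  define h\<^sub>0 where "h\<^sub>0 = min d (\<rho> / (2 * K + 1))"
  have h\<^sub>0: "h\<^sub>0 > 0" using d \<rho> K by (simp add: h\<^sub>0_def)
  show ?thesis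
  proof (rule that[OF h\<^sub>0])
    fix h :: real assume h: "0 < h" "h \<le> h\<^sub>0"
    have "h * (2 * K + 1) \<le> \<rho>" using h K by (simp add: h\<^sub>0_def field_simps)
    then have "K * h\<^sup>2 \<le> h * \<rho> / 2" using h K by (simp add: power2_eq_square algebra_simps)
    moreover have "\<bar>h\<bar> \<le> d" "\<bar>-h\<bar> \<le> d" using h by (auto simp: h\<^sub>0_def)
    ultimately show "e + h \<in> mgf_domain \<and> e - h \<in> mgf_domain \<and>
     log_mgf (e + h) - log_mgf e - h * (tilted_mean e + \<rho>) \<le> - (h * \<rho> / 2) \<and>
     log_mgf (e - h) - log_mgf e + h * (tilted_mean e - \<rho>) \<le> - (h * \<rho> / 2)"
      using dom[of h] dom[of "-h"] q[of h] q[of "-h"] by (simp add: algebra_simps)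
  qed
qed

lemma legendre_cgf_clamp:
  assumes "a \<le> expectation Y" "expectation Y \<le> b"
  shows "legendre cgf (max a (min b x)) \<le> legendre cgf x"
proof (cases "x \<le> a")
  case True
  then have "max a (min b x) = a" using assms by (simp add: max_def min_def)
  then show ?thesis using True assms legendre_cgf_mono_below_mean[of a x] by simp
next
  case False
  then show ?thesis using assms legendre_cgf_mono_above_mean[of b x] by (auto simp: max_def min_def)
qed

end

section \<open>Independent families of observations\<close>

locale iid_family = prob_space M for M :: "'a measure" +
  fixes X :: "nat \<Rightarrow> nat \<Rightarrow> 'a \<Rightarrow> real" and k :: nat
  assumes borel_measurable_X: "\<And>l t. l \<in> {1..k} \<Longrightarrow> X l t \<in> borel_measurable M"
    and indep_X: "indep_vars (\<lambda>_. borel) (\<lambda>p. X (fst p) (snd p)) ({1..k} \<times> UNIV)"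
    and distr_X: "\<And>l t. l \<in> {1..k} \<Longrightarrow> distr M borel (X l t) = distr M borel (X l 0)"
    and integrable_X: "\<And>l. l \<in> {1..k} \<Longrightarrow> integrable M (X l 0)"
begin

lemma real_rv_X: "l \<in> {1..k} \<Longrightarrow> real_rv M (X l 0)"
  by unfold_locales (auto intro: borel_measurable_X integrable_X)

definition psum :: "nat \<Rightarrow> nat \<Rightarrow> 'a \<Rightarrow> real" where
  "psum l n \<omega> = (\<Sum>t<n. X l t \<omega>)"

lemma borel_measurable_psum [measurable]: "l \<in> {1..k} \<Longrightarrow> psum l n \<in> borel_measurable M"
  unfolding psum_def[abs_def] using borel_measurable_X by (intro borel_measurable_sum) auto

lemma smean_eq_psum: "smean (X l) n \<omega> = psum l n \<omega> / real n"
  by (simp add: smean_def psum_def)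

lemma nn_integral_exp_X:
  assumes l: "l \<in> {1..k}"
  shows "(\<integral>\<^sup>+\<omega>. ennreal (exp (\<theta> * X l t \<omega>)) \<partial>M) = (\<integral>\<^sup>+\<omega>. ennreal (exp (\<theta> * X l 0 \<omega>)) \<partial>M)"
proof -
  have "(\<integral>\<^sup>+\<omega>. ennreal (exp (\<theta> * X l t \<omega>)) \<partial>M) = (\<integral>\<^sup>+x. ennreal (exp (\<theta> * x)) \<partial>distr M borel (X l t))"
    using borel_measurable_X[OF l] by (simp add: nn_integral_distr)
  also have "\<dots> = (\<integral>\<^sup>+\<omega>. ennreal (exp (\<theta> * X l 0 \<omega>)) \<partial>M)"
    using borel_measurable_X[OF l] by (simp add: distr_X[OF l, of t] nn_integral_distr)
  finally show ?thesis .
qed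

lemma nn_integral_exp_sum:
  assumes I: "finite I" "I \<subseteq> {1..k} \<times> UNIV"
  shows "(\<integral>\<^sup>+\<omega>. ennreal (exp (\<Sum>p\<in>I. c p * X (fst p) (snd p) \<omega>)) \<partial>M)
         = (\<Prod>p\<in>I. \<integral>\<^sup>+\<omega>. ennreal (exp (c p * X (fst p) 0 \<omega>)) \<partial>M)"
proof -
  have "indep_vars (\<lambda>_. borel) (\<lambda>p \<omega>. ennreal (exp (c p * X (fst p) (snd p) \<omega>))) I"
    by (rule indep_vars_compose2[OF indep_vars_subset[OF indep_X I(2)],
          where Y="\<lambda>p x. ennreal (exp (c p * x))"]) auto
  then have "(\<integral>\<^sup>+\<omega>. (\<Prod>p\<in>I. ennreal (exp (c p * X (fst p) (snd p) \<omega>))) \<partial>M)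
      = (\<Prod>p\<in>I. \<integral>\<^sup>+\<omega>. ennreal (exp (c p * X (fst p) (snd p) \<omega>)) \<partial>M)"
    by (rule indep_vars_nn_integral[OF I(1)]) auto
  also have "\<dots> = (\<Prod>p\<in>I. \<integral>\<^sup>+\<omega>. ennreal (exp (c p * X (fst p) 0 \<omega>)) \<partial>M)"
    using I(2) by (intro prod.cong refl nn_integral_exp_X) auto
  finally show ?thesis by (simp add: exp_sum[OF I(1)] prod_ennreal)
qed

lemma nn_integral_exp_psum:
  assumes l: "l \<in> {1..k}"
  shows "(\<integral>\<^sup>+\<omega>. ennreal (exp (\<theta> * psum l n \<omega>)) \<partial>M) = (\<integral>\<^sup>+\<omega>. ennreal (exp (\<theta> * X l 0 \<omega>)) \<partial>M) ^ n"
proof -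
  have "(\<integral>\<^sup>+\<omega>. ennreal (exp (\<theta> * psum l n \<omega>)) \<partial>M)
      = (\<integral>\<^sup>+\<omega>. ennreal (exp (\<Sum>p\<in>{l} \<times> {..<n}. \<theta> * X (fst p) (snd p) \<omega>)) \<partial>M)"
    by (simp add: psum_def sum_distrib_left sum_singleton_Times)
  also have "\<dots> = (\<Prod>p\<in>{l} \<times> {..<n}. \<integral>\<^sup>+\<omega>. ennreal (exp (\<theta> * X (fst p) 0 \<omega>)) \<partial>M)"
    using l by (intro nn_integral_exp_sum) auto
  finally show ?thesis by (simp add: prod_singleton_Times)
qed

lemma nn_integral_exp_psum_pair:
  assumes i: "i \<in> {1..k}" and j: "j \<in> {1..k}" and ij: "i \<noteq> j"
  shows "(\<integral>\<^sup>+\<omega>. ennreal (exp (a * psum i n \<omega> + b * psum j m \<omega>)) \<partial>M)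
    = (\<integral>\<^sup>+\<omega>. ennreal (exp (a * X i 0 \<omega>)) \<partial>M) ^ n * (\<integral>\<^sup>+\<omega>. ennreal (exp (b * X j 0 \<omega>)) \<partial>M) ^ m"
proof -
  define c where "c p = (if fst p = i then a else b)" for p :: "nat \<times> nat"
  have disj: "({i} \<times> {..<n}) \<inter> ({j} \<times> {..<m}) = {}" using ij by auto
  have "(\<integral>\<^sup>+\<omega>. ennreal (exp (a * psum i n \<omega> + b * psum j m \<omega>)) \<partial>M)
      = (\<integral>\<^sup>+\<omega>. ennreal (exp (\<Sum>p\<in>({i} \<times> {..<n}) \<union> ({j} \<times> {..<m}). c p * X (fst p) (snd p) \<omega>)) \<partial>M)"
    using ij disj
    by (simp add: sum.union_disjoint psum_def sum_distrib_left sum_singleton_Times c_def)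
  also have "\<dots> = (\<Prod>p\<in>({i} \<times> {..<n}) \<union> ({j} \<times> {..<m}). \<integral>\<^sup>+\<omega>. ennreal (exp (c p * X (fst p) 0 \<omega>)) \<partial>M)"
    using i j by (intro nn_integral_exp_sum) auto
  finally show ?thesis
    using ij disj by (simp add: prod.union_disjoint prod_singleton_Times c_def)
qed

lemma cgf_n_eq_cgf:
  assumes l: "l \<in> {1..k}" and n: "n > 0"
  shows "cgf_n M (X l) n (real n * \<theta>) / ereal (real n) = real_rv.cgf M (X l 0) \<theta>"
proof -
  interpret Xl: real_rv M "X l 0" by (rule real_rv_X[OF l])
  have "cgf_n M (X l) n (real n * \<theta>) = eln ((\<integral>\<^sup>+\<omega>. ennreal (exp (\<theta> * X l 0 \<omega>)) \<partial>M) ^ n)"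
    using n by (simp add: cgf_n_def smean_eq_psum nn_integral_exp_psum[OF l, symmetric])
  also have "\<dots> = (if \<theta> \<in> Xl.mgf_domain then ereal (real n * Xl.log_mgf \<theta>) else \<infinity>)"
  proof (cases "\<theta> \<in> Xl.mgf_domain")
    case True
    then have "Xl.mgf \<theta> ^ n > 0" using Xl.mgf_pos by simp
    then show ?thesis
      using True Xl.mgf_pos[OF True]
      by (simp add: Xl.nn_integral_exp_mult ennreal_power eln_ennreal Xl.log_mgf_def ln_realpow)
  next
    case False
    then show ?thesis using n by (simp add: Xl.nn_integral_exp_mult eln_def top_power_ennreal)
  qed
  finally show ?thesis using n by (simp add: Xl.cgf_def)
qed

lemma cgf_limit_eq:
  assumes "l \<in> {1..k}" and "((\<lambda>n. cgf_n M (X l) n (real n * \<theta>) / ereal (real n)) \<longlongrightarrow> \<Lambda>) sequentially"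
  shows "\<Lambda> = real_rv.cgf M (X l 0) \<theta>"
proof -
  have "\<forall>\<^sub>F n in sequentially. cgf_n M (X l) n (real n * \<theta>) / ereal (real n) = real_rv.cgf M (X l 0) \<theta>"
    using eventually_gt_at_top[of 0] by eventually_elim (rule cgf_n_eq_cgf[OF assms(1)])
  then show ?thesis using assms(2) by (rule LIMSEQ_unique[OF _ tendsto_eventually, rotated])
qed

end

locale alternative_pair = iid_family +
  fixes i j :: nat
  assumes i: "i \<in> {1..k}" and j: "j \<in> {1..k}" and i_ne_j: "i \<noteq> j"
begin

sublocale Xi: real_rv M "X i 0" by (rule real_rv_X[OF i])
sublocale Xj: real_rv M "X j 0" by (rule real_rv_X[OF j])

lemma
  assumes a: "a \<in> Xi.mgf_domain" and b: "b \<in> Xj.mgf_domain"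
  shows integrable_exp_psum_pair: "integrable M (\<lambda>\<omega>. exp (a * psum i n \<omega> + b * psum j m \<omega> + c))"
    and integral_exp_psum_pair: "(\<integral>\<omega>. exp (a * psum i n \<omega> + b * psum j m \<omega> + c) \<partial>M)
      = exp (c + real n * Xi.log_mgf a + real m * Xj.log_mgf b)"
proof -
  have nn: "(\<integral>\<^sup>+\<omega>. ennreal (exp (a * psum i n \<omega> + b * psum j m \<omega>)) \<partial>M)
      = ennreal (Xi.mgf a ^ n * Xj.mgf b ^ m)"
    using a b Xi.mgf_pos[OF a] Xj.mgf_pos[OF b]
    by (simp add: nn_integral_exp_psum_pair[OF i j i_ne_j] Xi.nn_integral_exp_mult Xj.nn_integral_exp_mult
        ennreal_power ennreal_mult)
  then have int: "integrable M (\<lambda>\<omega>. exp (a * psum i n \<omega> + b * psum j m \<omega>))"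
    using i j by (intro integrableI_nonneg) auto
  have "(\<integral>\<omega>. exp (a * psum i n \<omega> + b * psum j m \<omega>) \<partial>M) = Xi.mgf a ^ n * Xj.mgf b ^ m"
    using integral_eq_nn_integral[of "\<lambda>\<omega>. exp (a * psum i n \<omega> + b * psum j m \<omega>)" M] nn i j
      Xi.mgf_pos[OF a] Xj.mgf_pos[OF b] by simp
  also have "\<dots> = exp (real n * Xi.log_mgf a + real m * Xj.log_mgf b)"
    using Xi.mgf_pos[OF a] Xj.mgf_pos[OF b]
    by (simp add: Xi.log_mgf_def Xj.log_mgf_def exp_add exp_of_nat_mult)
  finally have "(\<integral>\<omega>. exp (a * psum i n \<omega> + b * psum j m \<omega>) \<partial>M)
      = exp (real n * Xi.log_mgf a + real m * Xj.log_mgf b)" .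
  moreover have "(\<lambda>\<omega>. exp (a * psum i n \<omega> + b * psum j m \<omega> + c))
      = (\<lambda>\<omega>. exp c * exp (a * psum i n \<omega> + b * psum j m \<omega>))"
    by (simp add: exp_add ac_simps)
  ultimately show "integrable M (\<lambda>\<omega>. exp (a * psum i n \<omega> + b * psum j m \<omega> + c))"
    and "(\<integral>\<omega>. exp (a * psum i n \<omega> + b * psum j m \<omega> + c) \<partial>M)
      = exp (c + real n * Xi.log_mgf a + real m * Xj.log_mgf b)"
    using int by (simp_all add: exp_add)
qed

lemma chernoff_pair:
  assumes a: "a \<in> Xi.mgf_domain" and b: "b \<in> Xj.mgf_domain" and A: "A \<in> sets M"
    and on_A: "\<And>\<omega>. \<omega> \<in> A \<Longrightarrow> 0 \<le> a * (psum i n \<omega> - real n * u) + b * (psum j m \<omega> - real m * v)"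
  shows "measure M A \<le> exp (real n * (Xi.log_mgf a - a * u) + real m * (Xj.log_mgf b - b * v))"
proof -
  define c where "c = - (a * real n * u) - b * real m * v"
  have "measure M A = (\<integral>\<omega>. indicator A \<omega> \<partial>M)" using A by (simp add: sets.Int_space_eq2)
  also have "\<dots> \<le> (\<integral>\<omega>. exp (a * psum i n \<omega> + b * psum j m \<omega> + c) \<partial>M)"
  proof (rule integral_mono)
    show "integrable M (indicator A :: 'a \<Rightarrow> real)"
      using A by (simp add: integrable_indicator_iff emeasure_eq_measure)
    show "integrable M (\<lambda>\<omega>. exp (a * psum i n \<omega> + b * psum j m \<omega> + c))"
      by (rule integrable_exp_psum_pair[OF a b])
    show "indicator A \<omega> \<le> exp (a * psum i n \<omega> + b * psum j m \<omega> + c)" for \<omega>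
      using on_A[of \<omega>] by (cases "\<omega> \<in> A") (auto simp: c_def algebra_simps)
  qed
  also have "\<dots> = exp (real n * (Xi.log_mgf a - a * u) + real m * (Xj.log_mgf b - b * v))"
    unfolding integral_exp_psum_pair[OF a b] by (simp add: c_def algebra_simps)
  finally show ?thesis .
qed

definition box :: "nat \<Rightarrow> nat \<Rightarrow> real \<Rightarrow> real \<Rightarrow> real \<Rightarrow> 'a set" where
  "box n m a b \<rho> = {\<omega> \<in> space M. \<bar>psum i n \<omega> / real n - a\<bar> < \<rho> \<and> \<bar>psum j m \<omega> / real m - b\<bar> < \<rho>}"

lemma sets_box [measurable]: "box n m a b \<rho> \<in> sets M"
  using i j unfolding box_def by measurable

lemma integral_exp_psum_pair_ratio:
  assumes "a \<in> Xi.mgf_domain" "b \<in> Xj.mgf_domain" "a' \<in> Xi.mgf_domain" "b' \<in> Xj.mgf_domain"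
  shows "(\<integral>\<omega>. exp (a' * psum i n \<omega> + b' * psum j m \<omega> + c) \<partial>M)
    = (\<integral>\<omega>. exp (a * psum i n \<omega> + b * psum j m \<omega>) \<partial>M)
      * exp (c + real n * (Xi.log_mgf a' - Xi.log_mgf a) + real m * (Xj.log_mgf b' - Xj.log_mgf b))"
  using integral_exp_psum_pair[OF assms(1,2), of n m 0] integral_exp_psum_pair[OF assms(3,4)]
  by (simp add: exp_add[symmetric] algebra_simps)

text \<open>Change of measure: under the tilt \<open>e\<^sup>W\<close> the partial sums concentrate in the box, since each
  of the four ways of leaving it is paid for by a further tilt by \<open>\<plusminus>h\<close>, which costs a factor
  \<open>e\<^sup>-\<^sup>\<kappa>\<close> per observation.\<close>

lemma integral_exp_on_box_ge:
  fixes n m :: nat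
  assumes ei: "ei \<in> Xi.mgf_domain" "ei + h \<in> Xi.mgf_domain" "ei - h \<in> Xi.mgf_domain"
    and ej: "ej \<in> Xj.mgf_domain" "ej + h \<in> Xj.mgf_domain" "ej - h \<in> Xj.mgf_domain"
    and h: "h \<ge> 0" and n: "n > 0" and m: "m > 0"
    and gain_i: "Xi.log_mgf (ei + h) - Xi.log_mgf ei - h * (a + \<rho>) \<le> - \<kappa>"
      "Xi.log_mgf (ei - h) - Xi.log_mgf ei + h * (a - \<rho>) \<le> - \<kappa>"
    and gain_j: "Xj.log_mgf (ej + h) - Xj.log_mgf ej - h * (b + \<rho>) \<le> - \<kappa>"
      "Xj.log_mgf (ej - h) - Xj.log_mgf ej + h * (b - \<rho>) \<le> - \<kappa>"
  defines "W \<equiv> \<lambda>\<omega>. ei * psum i n \<omega> + ej * psum j m \<omega>"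
  shows "(\<integral>\<omega>. exp (W \<omega>) \<partial>M) * (1 - 2 * exp (- \<kappa>) ^ n - 2 * exp (- \<kappa>) ^ m)
    \<le> (\<integral>\<omega>. exp (W \<omega>) * indicator (box n m a b \<rho>) \<omega> \<partial>M)"
proof -
  define K where "K = (\<integral>\<omega>. exp (W \<omega>) \<partial>M)"
  have K: "K > 0" unfolding K_def W_def using integral_exp_psum_pair[OF ei(1) ej(1), of n m 0] by simp
  have tilt: "integrable M (\<lambda>\<omega>. exp (a' * psum i n \<omega> + b' * psum j m \<omega> + c))
      \<and> (\<integral>\<omega>. exp (a' * psum i n \<omega> + b' * psum j m \<omega> + c) \<partial>M) \<le> K * exp (- \<kappa>) ^ l"
    if "a' \<in> Xi.mgf_domain" "b' \<in> Xj.mgf_domain"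
      and "c + real n * (Xi.log_mgf a' - Xi.log_mgf ei) + real m * (Xj.log_mgf b' - Xj.log_mgf ej) = real l * t"
      and "t \<le> - \<kappa>" for a' b' c l t
  proof
    show "integrable M (\<lambda>\<omega>. exp (a' * psum i n \<omega> + b' * psum j m \<omega> + c))"
      by (rule integrable_exp_psum_pair[OF that(1,2)])
    have "exp (real l * t) \<le> exp (- \<kappa>) ^ l" using that(4) by (intro exp_mult_le_power) simp
    then show "(\<integral>\<omega>. exp (a' * psum i n \<omega> + b' * psum j m \<omega> + c) \<partial>M) \<le> K * exp (- \<kappa>) ^ l"
      using K unfolding integral_exp_psum_pair_ratio[OF ei(1) ej(1) that(1,2)] K_def W_def that(3)
      by (simp add: mult_left_mono)
  qed
  define f where "f \<omega> = exp ((ei + h) * psum i n \<omega> + ej * psum j m \<omega> + - (h * n * (a + \<rho>)))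
    + exp ((ei - h) * psum i n \<omega> + ej * psum j m \<omega> + h * n * (a - \<rho>))
    + exp (ei * psum i n \<omega> + (ej + h) * psum j m \<omega> + - (h * m * (b + \<rho>)))
    + exp (ei * psum i n \<omega> + (ej - h) * psum j m \<omega> + h * m * (b - \<rho>))" for \<omega>
  note t1 = tilt[OF ei(2) ej(1) _ gain_i(1)] and t2 = tilt[OF ei(3) ej(1) _ gain_i(2)]
    and t3 = tilt[OF ei(1) ej(2) _ gain_j(1)] and t4 = tilt[OF ei(1) ej(3) _ gain_j(2)]
  have int_f: "integrable M f" and Ef: "(\<integral>\<omega>. f \<omega> \<partial>M) \<le> K * (2 * exp (- \<kappa>) ^ n + 2 * exp (- \<kappa>) ^ m)"
    using t1[of "- (h * n * (a + \<rho>))" n] t2[of "h * n * (a - \<rho>)" n]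
      t3[of "- (h * m * (b + \<rho>))" m] t4[of "h * m * (b - \<rho>)" m]
    unfolding f_def by (simp_all add: algebra_simps)
  have int_W: "integrable M (\<lambda>\<omega>. exp (W \<omega>))"
    unfolding W_def using integrable_exp_psum_pair[OF ei(1) ej(1), of n m 0] by simp
  then have int_WB: "integrable M (\<lambda>\<omega>. exp (W \<omega>) * indicator (box n m a b \<rho>) \<omega>)"
    by (rule integrable_real_mult_indicator[OF sets_box])
  have "exp (W \<omega>) \<le> exp (W \<omega>) * indicator (box n m a b \<rho>) \<omega> + f \<omega>" if "\<omega> \<in> space M" for \<omega>
    using that exp_le_tilts_outside_box[OF _ _ h, of n m "psum i n \<omega>" a \<rho> "psum j m \<omega>" b ei ej] n m
    by (cases "\<omega> \<in> box n m a b \<rho>") (auto simp: box_def f_def W_def add_nonneg_nonneg)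
  then have "K \<le> (\<integral>\<omega>. exp (W \<omega>) * indicator (box n m a b \<rho>) \<omega> + f \<omega> \<partial>M)"
    unfolding K_def using int_W int_WB int_f by (intro integral_mono) auto
  also have "\<dots> = (\<integral>\<omega>. exp (W \<omega>) * indicator (box n m a b \<rho>) \<omega> \<partial>M) + (\<integral>\<omega>. f \<omega> \<partial>M)"
    by (rule Bochner_Integration.integral_add[OF int_WB int_f])
  finally show ?thesis using Ef unfolding K_def[symmetric] by (simp add: algebra_simps)
qed

lemma tilted_box_estimate:
  fixes n m :: nat
  assumes ei: "ei \<in> Xi.mgf_domain" "ei + h \<in> Xi.mgf_domain" "ei - h \<in> Xi.mgf_domain"
    and ej: "ej \<in> Xj.mgf_domain" "ej + h \<in> Xj.mgf_domain" "ej - h \<in> Xj.mgf_domain"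
    and h: "h \<ge> 0" and n: "n > 0" and m: "m > 0"
    and gain_i: "Xi.log_mgf (ei + h) - Xi.log_mgf ei - h * (a + \<rho>) \<le> - \<kappa>"
      "Xi.log_mgf (ei - h) - Xi.log_mgf ei + h * (a - \<rho>) \<le> - \<kappa>"
    and gain_j: "Xj.log_mgf (ej + h) - Xj.log_mgf ej - h * (b + \<rho>) \<le> - \<kappa>"
      "Xj.log_mgf (ej - h) - Xj.log_mgf ej + h * (b - \<rho>) \<le> - \<kappa>"
  shows "exp (- real n * (ei * a - Xi.log_mgf ei + \<bar>ei\<bar> * \<rho>) - real m * (ej * b - Xj.log_mgf ej + \<bar>ej\<bar> * \<rho>))
      * (1 - 2 * exp (- \<kappa>) ^ n - 2 * exp (- \<kappa>) ^ m) \<le> measure M (box n m a b \<rho>)"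
proof -
  define W where "W \<omega> = ei * psum i n \<omega> + ej * psum j m \<omega>" for \<omega>
  define c where "c = real n * (ei * a + \<bar>ei\<bar> * \<rho>) + real m * (ej * b + \<bar>ej\<bar> * \<rho>)"
  have "exp (- c) * (exp (W \<omega>) * indicator (box n m a b \<rho>) \<omega>) \<le> indicator (box n m a b \<rho>) \<omega>" for \<omega>
  proof (cases "\<omega> \<in> box n m a b \<rho>")
    case True
    then have "W \<omega> \<le> c" using n m by (auto simp: box_def W_def c_def intro!: add_mono mult_le_of_mean_in_window)
    then show ?thesis using True by (simp add: exp_minus field_simps)
  qed simp
  then have "exp (- c) * (\<integral>\<omega>. exp (W \<omega>) * indicator (box n m a b \<rho>) \<omega> \<partial>M) \<le> measure M (box n m a b \<rho>)"
    using integral_exp_psum_pair[OF ei(1) ej(1), of n m 0] integrable_exp_psum_pair[OF ei(1) ej(1), of n m 0]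
      integral_mono[of M "\<lambda>\<omega>. exp (- c) * (exp (W \<omega>) * indicator (box n m a b \<rho>) \<omega>)" "indicator (box n m a b \<rho>)"]
    by (simp add: W_def integrable_real_mult_indicator integrable_indicator_iff emeasure_eq_measure
        sets.Int_space_eq2)
  moreover have "exp (- c) * (\<integral>\<omega>. exp (W \<omega>) \<partial>M) = exp (- real n * (ei * a - Xi.log_mgf ei + \<bar>ei\<bar> * \<rho>)
      - real m * (ej * b - Xj.log_mgf ej + \<bar>ej\<bar> * \<rho>))"
    using integral_exp_psum_pair[OF ei(1) ej(1), of n m 0]
    by (simp add: W_def c_def exp_add[symmetric] algebra_simps)
  moreover have "exp (- c) * ((\<integral>\<omega>. exp (W \<omega>) \<partial>M) * (1 - 2 * exp (- \<kappa>) ^ n - 2 * exp (- \<kappa>) ^ m))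
      \<le> exp (- c) * (\<integral>\<omega>. exp (W \<omega>) * indicator (box n m a b \<rho>) \<omega> \<partial>M)"
    using integral_exp_on_box_ge[OF assms, folded W_def] by (intro mult_left_mono) auto
  ultimately show ?thesis by (simp add: mult.assoc[symmetric])
qed

lemma common_tilt_gain:
  assumes ei: "ei \<in> interior Xi.mgf_domain" and ej: "ej \<in> interior Xj.mgf_domain" and \<rho>: "\<rho> > 0"
  obtains h where "h > 0"
    "ei + h \<in> Xi.mgf_domain" "ei - h \<in> Xi.mgf_domain" "ej + h \<in> Xj.mgf_domain" "ej - h \<in> Xj.mgf_domain"
    "Xi.log_mgf (ei + h) - Xi.log_mgf ei - h * (Xi.tilted_mean ei + \<rho>) \<le> - (h * \<rho> / 2)"
    "Xi.log_mgf (ei - h) - Xi.log_mgf ei + h * (Xi.tilted_mean ei - \<rho>) \<le> - (h * \<rho> / 2)"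
    "Xj.log_mgf (ej + h) - Xj.log_mgf ej - h * (Xj.tilted_mean ej + \<rho>) \<le> - (h * \<rho> / 2)"
    "Xj.log_mgf (ej - h) - Xj.log_mgf ej + h * (Xj.tilted_mean ej - \<rho>) \<le> - (h * \<rho> / 2)"
proof -
  obtain h\<^sub>i h\<^sub>j where "h\<^sub>i > 0" "h\<^sub>j > 0"
    and tilt_i: "\<And>h. 0 < h \<Longrightarrow> h \<le> h\<^sub>i \<Longrightarrow> ei + h \<in> Xi.mgf_domain \<and> ei - h \<in> Xi.mgf_domain \<and>
      Xi.log_mgf (ei + h) - Xi.log_mgf ei - h * (Xi.tilted_mean ei + \<rho>) \<le> - (h * \<rho> / 2) \<and>
      Xi.log_mgf (ei - h) - Xi.log_mgf ei + h * (Xi.tilted_mean ei - \<rho>) \<le> - (h * \<rho> / 2)"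
    and tilt_j: "\<And>h. 0 < h \<Longrightarrow> h \<le> h\<^sub>j \<Longrightarrow> ej + h \<in> Xj.mgf_domain \<and> ej - h \<in> Xj.mgf_domain \<and>
      Xj.log_mgf (ej + h) - Xj.log_mgf ej - h * (Xj.tilted_mean ej + \<rho>) \<le> - (h * \<rho> / 2) \<and>
      Xj.log_mgf (ej - h) - Xj.log_mgf ej + h * (Xj.tilted_mean ej - \<rho>) \<le> - (h * \<rho> / 2)"
    by (metis Xi.log_mgf_tilt_gain[OF ei \<rho>] Xj.log_mgf_tilt_gain[OF ej \<rho>])
  have "min h\<^sub>i h\<^sub>j > 0" "min h\<^sub>i h\<^sub>j \<le> h\<^sub>i" "min h\<^sub>i h\<^sub>j \<le> h\<^sub>j" using \<open>h\<^sub>i > 0\<close> \<open>h\<^sub>j > 0\<close> by simp_all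
  with tilt_i tilt_j show ?thesis using that by meson
qed

lemma box_lower_bound:
  assumes ei: "ei \<in> interior Xi.mgf_domain" and ej: "ej \<in> interior Xj.mgf_domain" and \<rho>: "\<rho> > 0"
  obtains N where "\<And>n m. N \<le> n \<Longrightarrow> N \<le> m \<Longrightarrow>
      exp (- real n * (Xi.rate (Xi.tilted_mean ei) + \<bar>ei\<bar> * \<rho>)
           - real m * (Xj.rate (Xj.tilted_mean ej) + \<bar>ej\<bar> * \<rho>)) / 2
      \<le> measure M (box n m (Xi.tilted_mean ei) (Xj.tilted_mean ej) \<rho>)"
proof -
  obtain h where h: "h > 0" and dom: "ei + h \<in> Xi.mgf_domain" "ei - h \<in> Xi.mgf_domain"
      "ej + h \<in> Xj.mgf_domain" "ej - h \<in> Xj.mgf_domain"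
    and gain: "Xi.log_mgf (ei + h) - Xi.log_mgf ei - h * (Xi.tilted_mean ei + \<rho>) \<le> - (h * \<rho> / 2)"
      "Xi.log_mgf (ei - h) - Xi.log_mgf ei + h * (Xi.tilted_mean ei - \<rho>) \<le> - (h * \<rho> / 2)"
      "Xj.log_mgf (ej + h) - Xj.log_mgf ej - h * (Xj.tilted_mean ej + \<rho>) \<le> - (h * \<rho> / 2)"
      "Xj.log_mgf (ej - h) - Xj.log_mgf ej + h * (Xj.tilted_mean ej - \<rho>) \<le> - (h * \<rho> / 2)"
    by (rule common_tilt_gain[OF ei ej \<rho>])
  define q where "q = exp (- (h * \<rho> / 2))"
  have "q < 1" using h \<rho> by (simp add: q_def)
  then have "\<forall>\<^sub>F n in sequentially. q ^ n < 1 / 8"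
    by (intro order_tendstoD(2)[OF LIMSEQ_power_zero]) (auto simp: q_def)
  then obtain N where N: "\<And>n. N \<le> n \<Longrightarrow> q ^ n < 1 / 8" by (auto simp: eventually_sequentially)
  show ?thesis
  proof (rule that[of "Suc N"])
    fix n m :: nat assume n: "Suc N \<le> n" and m: "Suc N \<le> m"
    define c where "c = exp (- real n * (Xi.rate (Xi.tilted_mean ei) + \<bar>ei\<bar> * \<rho>)
      - real m * (Xj.rate (Xj.tilted_mean ej) + \<bar>ej\<bar> * \<rho>))"
    have "ei \<in> Xi.mgf_domain" "ej \<in> Xj.mgf_domain" using ei ej interior_subset by blast+
    from tilted_box_estimate[OF this(1) dom(1,2) this(2) dom(3,4) _ _ _ gain] h n m
    have "c * (1 - 2 * q ^ n - 2 * q ^ m) \<le> measure M (box n m (Xi.tilted_mean ei) (Xj.tilted_mean ej) \<rho>)"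
      by (simp add: c_def q_def Xi.rate_tilted_mean[OF ei] Xj.rate_tilted_mean[OF ej])
    moreover have "c * (1 / 2) \<le> c * (1 - 2 * q ^ n - 2 * q ^ m)"
      using N[of n] N[of m] n m by (intro mult_left_mono) (auto simp: c_def)
    ultimately show "c / 2 \<le> measure M (box n m (Xi.tilted_mean ei) (Xj.tilted_mean ej) \<rho>)" by simp
  qed
qed

end

section \<open>The rate of misordering two alternatives\<close>

locale pair_rates = alternative_pair +
  fixes r\<^sub>i r\<^sub>j A\<^sub>i A\<^sub>j d :: real
  assumes r_pos: "r\<^sub>i > 0" "r\<^sub>j > 0"
    and mean_less: "expectation (X j 0) < expectation (X i 0)"
    and interior_i: "{expectation (X j 0)..expectation (X i 0)} \<subseteq> interior (Xi.tilted_mean ` interior Xi.mgf_domain)"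
    and interior_j: "{expectation (X j 0)..expectation (X i 0)} \<subseteq> interior (Xj.tilted_mean ` interior Xj.mgf_domain)"
    and coercive_i: "Xi.legendre_coercive (expectation (X j 0)) (expectation (X i 0)) A\<^sub>i d"
    and coercive_j: "Xj.legendre_coercive (expectation (X j 0)) (expectation (X i 0)) A\<^sub>j d"
begin

abbreviation "\<mu>\<^sub>i \<equiv> expectation (X i 0)"
abbreviation "\<mu>\<^sub>j \<equiv> expectation (X j 0)"

definition misorder :: "real \<Rightarrow> 'a set" where
  "misorder T = {\<omega> \<in> space M. smean (X i) (sample_size r\<^sub>i T) \<omega> \<le> smean (X j) (sample_size r\<^sub>j T) \<omega>}"

definition lower_tail :: "real \<Rightarrow> real \<Rightarrow> 'a set" where
  "lower_tail u T = {\<omega> \<in> space M. psum i (sample_size r\<^sub>i T) \<omega> \<le> real (sample_size r\<^sub>i T) * u}"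

definition upper_tail :: "real \<Rightarrow> real \<Rightarrow> 'a set" where
  "upper_tail v T = {\<omega> \<in> space M. real (sample_size r\<^sub>j T) * v \<le> psum j (sample_size r\<^sub>j T) \<omega>}"

definition combined_rate :: "real \<Rightarrow> real" where
  "combined_rate x = r\<^sub>i * Xi.rate x + r\<^sub>j * Xj.rate x"

definition pair_rate :: real where
  "pair_rate = real_of_ereal (Grate Xi.cgf Xj.cgf r\<^sub>i r\<^sub>j)"

lemma sets_misorder [measurable]: "misorder T \<in> sets M"
  and sets_lower_tail [measurable]: "lower_tail u T \<in> sets M"
  and sets_upper_tail [measurable]: "upper_tail v T \<in> sets M"
  using i j unfolding misorder_def lower_tail_def upper_tail_def smean_eq_psum by measurable

lemma mem_window: "x \<in> {\<mu>\<^sub>j..\<mu>\<^sub>i} \<Longrightarrow> x \<in> {\<mu>\<^sub>j - d..\<mu>\<^sub>i + d}"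
  using Xi.coercive_pos[OF coercive_i] by auto

lemma Grate_summand_eq:
  "x \<in> {\<mu>\<^sub>j - d..\<mu>\<^sub>i + d} \<Longrightarrow>
    ereal r\<^sub>i * legendre Xi.cgf x + ereal r\<^sub>j * legendre Xj.cgf x = ereal (combined_rate x)"
  by (simp add: Xi.legendre_cgf_eq_rate[OF coercive_i] Xj.legendre_cgf_eq_rate[OF coercive_j]
      combined_rate_def)

lemma Grate_eq_pair_rate: "Grate Xi.cgf Xj.cgf r\<^sub>i r\<^sub>j = ereal pair_rate"
proof -
  have "Grate Xi.cgf Xj.cgf r\<^sub>i r\<^sub>j \<le> ereal (combined_rate \<mu>\<^sub>i)"
    unfolding Grate_def using mem_window[of \<mu>\<^sub>i] mean_less
    by (intro INF_lower2[where i="\<mu>\<^sub>i"]) (simp_all add: Grate_summand_eq)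
  moreover have "0 \<le> Grate Xi.cgf Xj.cgf r\<^sub>i r\<^sub>j"
    unfolding Grate_def
    using Xi.legendre_cgf_nonneg Xj.legendre_cgf_nonneg r_pos by (intro INF_greatest add_nonneg_nonneg) simp_all
  ultimately show ?thesis unfolding pair_rate_def by (cases "Grate Xi.cgf Xj.cgf r\<^sub>i r\<^sub>j") auto
qed

lemma pair_rate_le:
  assumes "x \<in> {\<mu>\<^sub>j - d..\<mu>\<^sub>i + d}"
  shows "pair_rate \<le> combined_rate x"
proof -
  have "Grate Xi.cgf Xj.cgf r\<^sub>i r\<^sub>j \<le> ereal r\<^sub>i * legendre Xi.cgf x + ereal r\<^sub>j * legendre Xj.cgf x"
    unfolding Grate_def by (rule INF_lower) simp
  then show ?thesis using Grate_eq_pair_rate Grate_summand_eq[OF assms] by simp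
qed

text \<open>Clamping to \<open>[\<mu>\<^sub>j, \<mu>\<^sub>i]\<close> does not increase either Legendre transform, so the infimum defining
  \<open>pair_rate\<close> is approached inside that interval.\<close>

lemma pair_rate_approx:
  assumes "\<epsilon> > 0"
  obtains y where "y \<in> {\<mu>\<^sub>j..\<mu>\<^sub>i}" "combined_rate y < pair_rate + \<epsilon>"
proof -
  have "Grate Xi.cgf Xj.cgf r\<^sub>i r\<^sub>j < ereal (pair_rate + \<epsilon>)" using Grate_eq_pair_rate assms by simp
  then obtain x where x: "ereal r\<^sub>i * legendre Xi.cgf x + ereal r\<^sub>j * legendre Xj.cgf x < ereal (pair_rate + \<epsilon>)"
    unfolding Grate_def by (auto simp: INF_less_iff)
  define y where "y = max \<mu>\<^sub>j (min \<mu>\<^sub>i x)"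
  have y: "y \<in> {\<mu>\<^sub>j..\<mu>\<^sub>i}" using mean_less by (auto simp: y_def)
  have "ereal (combined_rate y) = ereal r\<^sub>i * legendre Xi.cgf y + ereal r\<^sub>j * legendre Xj.cgf y"
    using Grate_summand_eq[OF mem_window[OF y]] by simp
  also have "\<dots> \<le> ereal r\<^sub>i * legendre Xi.cgf x + ereal r\<^sub>j * legendre Xj.cgf x"
    unfolding y_def using mean_less r_pos
    by (intro add_mono ereal_mult_left_mono Xi.legendre_cgf_clamp Xj.legendre_cgf_clamp) auto
  also note x
  finally show ?thesis using that y by simp
qed

lemma chernoff_decay:
  assumes a: "a \<in> Xi.mgf_domain" and b: "b \<in> Xj.mgf_domain" and A: "\<And>T. A T \<in> sets M"
    and on_A: "\<And>T \<omega>. T > 0 \<Longrightarrow> \<omega> \<in> A T \<Longrightarrow>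
       0 \<le> a * (psum i (sample_size r\<^sub>i T) \<omega> - real (sample_size r\<^sub>i T) * u)
          + b * (psum j (sample_size r\<^sub>j T) \<omega> - real (sample_size r\<^sub>j T) * v)"
  shows "decays_at_least (\<lambda>T. measure M (A T)) (r\<^sub>i * (a * u - Xi.log_mgf a) + r\<^sub>j * (b * v - Xj.log_mgf b))"
  unfolding decays_at_least_def
proof (intro exI allI impI)
  fix T :: real assume T: "T > 0"
  define c\<^sub>i c\<^sub>j where "c\<^sub>i = Xi.log_mgf a - a * u" and "c\<^sub>j = Xj.log_mgf b - b * v"
  have "measure M (A T) \<le> exp (real (sample_size r\<^sub>i T) * c\<^sub>i + real (sample_size r\<^sub>j T) * c\<^sub>j)"
    unfolding c\<^sub>i_def c\<^sub>j_def using on_A[OF T] by (intro chernoff_pair[OF a b A]) auto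
  also have "\<dots> \<le> exp (\<bar>c\<^sub>i\<bar> + \<bar>c\<^sub>j\<bar> - T * (r\<^sub>i * (a * u - Xi.log_mgf a) + r\<^sub>j * (b * v - Xj.log_mgf b)))"
    using sample_size_mult_le[OF r_pos(1) T, of c\<^sub>i] sample_size_mult_le[OF r_pos(2) T, of c\<^sub>j]
    by (simp add: c\<^sub>i_def c\<^sub>j_def algebra_simps)
  finally show "measure M (A T)
      \<le> exp (\<bar>c\<^sub>i\<bar> + \<bar>c\<^sub>j\<bar> - T * (r\<^sub>i * (a * u - Xi.log_mgf a) + r\<^sub>j * (b * v - Xj.log_mgf b)))" .
qed

lemma mean_window: "\<mu>\<^sub>j \<in> {\<mu>\<^sub>j - d..\<mu>\<^sub>i + d}" "\<mu>\<^sub>i \<in> {\<mu>\<^sub>j - d..\<mu>\<^sub>i + d}"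
  using mem_window[of \<mu>\<^sub>j] mem_window[of \<mu>\<^sub>i] mean_less by auto

lemma lower_tail_decays:
  assumes \<epsilon>: "\<epsilon> > 0"
  shows "decays_at_least (\<lambda>T. measure M (lower_tail \<mu>\<^sub>j T)) (pair_rate - \<epsilon>)"
proof -
  have "\<epsilon> / r\<^sub>i > 0" using \<epsilon> r_pos by simp
  then obtain a where a: "a \<in> Xi.mgf_domain" "a \<le> 0" "Xi.log_mgf a - a * \<mu>\<^sub>j < \<epsilon> / r\<^sub>i - Xi.rate \<mu>\<^sub>j"
    using mean_less by (auto intro: Xi.rate_approx_nonpos[OF coercive_i mean_window(1)])
  have "decays_at_least (\<lambda>T. measure M (lower_tail \<mu>\<^sub>j T))
      (r\<^sub>i * (a * \<mu>\<^sub>j - Xi.log_mgf a) + r\<^sub>j * (0 * \<mu>\<^sub>j - Xj.log_mgf 0))"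
    using a by (intro chernoff_decay Xj.zero_in_mgf_domain sets_lower_tail)
      (auto simp: lower_tail_def mult_nonpos_nonpos)
  moreover have "pair_rate \<le> r\<^sub>i * Xi.rate \<mu>\<^sub>j"
    using pair_rate_le[OF mean_window(1)] by (simp add: combined_rate_def Xj.rate_mean)
  then have "pair_rate - \<epsilon> \<le> r\<^sub>i * (a * \<mu>\<^sub>j - Xi.log_mgf a) + r\<^sub>j * (0 * \<mu>\<^sub>j - Xj.log_mgf 0)"
    using a(3) r_pos by (simp add: Xj.log_mgf_0 field_simps)
  ultimately show ?thesis by (rule decays_at_least_mono) simp
qed

lemma upper_tail_decays:
  assumes \<epsilon>: "\<epsilon> > 0"
  shows "decays_at_least (\<lambda>T. measure M (upper_tail \<mu>\<^sub>i T)) (pair_rate - \<epsilon>)"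
proof -
  have "\<epsilon> / r\<^sub>j > 0" using \<epsilon> r_pos by simp
  then obtain b where b: "b \<in> Xj.mgf_domain" "0 \<le> b" "Xj.log_mgf b - b * \<mu>\<^sub>i < \<epsilon> / r\<^sub>j - Xj.rate \<mu>\<^sub>i"
    using mean_less by (auto intro: Xj.rate_approx_nonneg[OF coercive_j mean_window(2)])
  have "decays_at_least (\<lambda>T. measure M (upper_tail \<mu>\<^sub>i T))
      (r\<^sub>i * (0 * \<mu>\<^sub>i - Xi.log_mgf 0) + r\<^sub>j * (b * \<mu>\<^sub>i - Xj.log_mgf b))"
    using b by (intro chernoff_decay Xi.zero_in_mgf_domain sets_upper_tail) (auto simp: upper_tail_def)
  moreover have "pair_rate \<le> r\<^sub>j * Xj.rate \<mu>\<^sub>i"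
    using pair_rate_le[OF mean_window(2)] by (simp add: combined_rate_def Xi.rate_mean)
  then have "pair_rate - \<epsilon> \<le> r\<^sub>i * (0 * \<mu>\<^sub>i - Xi.log_mgf 0) + r\<^sub>j * (b * \<mu>\<^sub>i - Xj.log_mgf b)"
    using b(3) r_pos by (simp add: Xi.log_mgf_0 field_simps)
  ultimately show ?thesis by (rule decays_at_least_mono) simp
qed

lemma both_tails_decay:
  assumes u: "u \<in> {\<mu>\<^sub>j - d..\<mu>\<^sub>i + d}" "u \<le> \<mu>\<^sub>i" and v: "v \<in> {\<mu>\<^sub>j - d..\<mu>\<^sub>i + d}" "\<mu>\<^sub>j \<le> v"
    and \<epsilon>: "\<epsilon> > 0"
  shows "decays_at_least (\<lambda>T. measure M (lower_tail u T \<inter> upper_tail v T))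
    (r\<^sub>i * Xi.rate u + r\<^sub>j * Xj.rate v - \<epsilon>)"
proof -
  have "\<epsilon> / (2 * r\<^sub>i) > 0" "\<epsilon> / (2 * r\<^sub>j) > 0" using \<epsilon> r_pos by simp_all
  obtain a where a: "a \<in> Xi.mgf_domain" "a \<le> 0" "Xi.log_mgf a - a * u < \<epsilon> / (2 * r\<^sub>i) - Xi.rate u"
    by (rule Xi.rate_approx_nonpos[OF coercive_i u \<open>\<epsilon> / (2 * r\<^sub>i) > 0\<close>])
  obtain b where b: "b \<in> Xj.mgf_domain" "0 \<le> b" "Xj.log_mgf b - b * v < \<epsilon> / (2 * r\<^sub>j) - Xj.rate v"
    by (rule Xj.rate_approx_nonneg[OF coercive_j v \<open>\<epsilon> / (2 * r\<^sub>j) > 0\<close>])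
  have "decays_at_least (\<lambda>T. measure M (lower_tail u T \<inter> upper_tail v T))
      (r\<^sub>i * (a * u - Xi.log_mgf a) + r\<^sub>j * (b * v - Xj.log_mgf b))"
    using a b by (intro chernoff_decay sets.Int sets_lower_tail sets_upper_tail)
      (auto simp: lower_tail_def upper_tail_def mult_nonpos_nonpos)
  moreover have "r\<^sub>i * Xi.rate u + r\<^sub>j * Xj.rate v - \<epsilon> \<le> r\<^sub>i * (a * u - Xi.log_mgf a) + r\<^sub>j * (b * v - Xj.log_mgf b)"
    using a(3) b(3) r_pos by (simp add: field_simps)
  ultimately show ?thesis by (rule decays_at_least_mono) simp
qed

lemma misorder_subset_tails:
  assumes T: "T > 0" and N: "N > 0"
  defines "x \<equiv> \<lambda>q::nat. \<mu>\<^sub>j + real q * (\<mu>\<^sub>i - \<mu>\<^sub>j) / real N"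
  shows "misorder T \<subseteq> lower_tail \<mu>\<^sub>j T \<union> upper_tail \<mu>\<^sub>i T
    \<union> (\<Union>q\<in>{1..N}. lower_tail (x q) T \<inter> upper_tail (x (q - 1)) T)"
proof
  fix \<omega> assume \<omega>: "\<omega> \<in> misorder T"
  define n m where "n = sample_size r\<^sub>i T" and "m = sample_size r\<^sub>j T"
  have n: "real n > 0" and m: "real m > 0"
    using sample_size_bounds(3)[OF r_pos(1) T] sample_size_bounds(3)[OF r_pos(2) T]
    by (simp_all add: n_def m_def)
  have \<omega>_space: "\<omega> \<in> space M" using \<omega> by (simp add: misorder_def)
  have lower: "\<omega> \<in> lower_tail u T \<longleftrightarrow> psum i n \<omega> / real n \<le> u" for u
    using \<omega>_space n by (simp add: lower_tail_def n_def pos_divide_le_eq mult.commute)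
  have upper: "\<omega> \<in> upper_tail v T \<longleftrightarrow> v \<le> psum j m \<omega> / real m" for v
    using \<omega>_space m by (simp add: upper_tail_def m_def pos_le_divide_eq mult.commute)
  have "psum i n \<omega> / real n \<le> psum j m \<omega> / real m"
    using \<omega> by (simp add: misorder_def smean_eq_psum n_def m_def)
  from grid_cover[OF this mean_less N]
  consider "psum i n \<omega> / real n \<le> \<mu>\<^sub>j" | "\<mu>\<^sub>i \<le> psum j m \<omega> / real m"
    | q where "q \<in> {1..N}" "psum i n \<omega> / real n \<le> x q" "x (q - 1) \<le> psum j m \<omega> / real m"
    unfolding x_def by blast
  then show "\<omega> \<in> lower_tail \<mu>\<^sub>j T \<union> upper_tail \<mu>\<^sub>i T
      \<union> (\<Union>q\<in>{1..N}. lower_tail (x q) T \<inter> upper_tail (x (q - 1)) T)"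
    by cases (auto simp only: lower upper UN_iff Un_iff Int_iff)
qed

lemma measure_misorder_le:
  assumes T: "T > 0" and N: "N > 0"
  defines "x \<equiv> \<lambda>q::nat. \<mu>\<^sub>j + real q * (\<mu>\<^sub>i - \<mu>\<^sub>j) / real N"
  shows "measure M (misorder T) \<le> measure M (lower_tail \<mu>\<^sub>j T) + measure M (upper_tail \<mu>\<^sub>i T)
    + (\<Sum>q\<in>{1..N}. measure M (lower_tail (x q) T \<inter> upper_tail (x (q - 1)) T))"
proof -
  have "measure M (misorder T) \<le> measure M (lower_tail \<mu>\<^sub>j T \<union> upper_tail \<mu>\<^sub>i T
      \<union> (\<Union>q\<in>{1..N}. lower_tail (x q) T \<inter> upper_tail (x (q - 1)) T))"
    using misorder_subset_tails[OF T N] by (intro finite_measure_mono) (auto simp: x_def)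
  also have "\<dots> \<le> measure M (lower_tail \<mu>\<^sub>j T) + measure M (upper_tail \<mu>\<^sub>i T)
      + (\<Sum>q\<in>{1..N}. measure M (lower_tail (x q) T \<inter> upper_tail (x (q - 1)) T))"
    by (rule order_trans[OF measure_Un_le add_mono[OF measure_Un_le measure_UNION_le]]) auto
  finally show ?thesis .
qed

text \<open>Between consecutive grid points the Lipschitz bound on \<open>Xi.rate\<close> loses at most \<open>\<epsilon>/2\<close>.\<close>

lemma grid_tails_decay:
  assumes uv: "u \<in> {\<mu>\<^sub>j..\<mu>\<^sub>i}" "v \<in> {\<mu>\<^sub>j..\<mu>\<^sub>i}" "v \<le> u"
    and step: "r\<^sub>i * ((A\<^sub>i + 1) / d) * (u - v) \<le> \<epsilon> / 2" and \<epsilon>: "\<epsilon> > 0"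
  shows "decays_at_least (\<lambda>T. measure M (lower_tail u T \<inter> upper_tail v T)) (pair_rate - \<epsilon>)"
proof -
  have "Xi.rate v - (A\<^sub>i + 1) / d * \<bar>u - v\<bar> \<le> Xi.rate u"
    by (rule Xi.rate_lipschitz[OF coercive_i mem_window mem_window]) (use uv in auto)
  then have "r\<^sub>i * (Xi.rate v - (A\<^sub>i + 1) / d * (u - v)) \<le> r\<^sub>i * Xi.rate u"
    using r_pos uv(3) by (intro mult_left_mono) auto
  then have "r\<^sub>i * Xi.rate v - \<epsilon> / 2 \<le> r\<^sub>i * Xi.rate u"
    using step by (simp only: right_diff_distrib mult.assoc)
  then have rate: "pair_rate - \<epsilon> \<le> r\<^sub>i * Xi.rate u + r\<^sub>j * Xj.rate v - \<epsilon> / 2"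
    using pair_rate_le[OF mem_window[OF uv(2)]] by (simp add: combined_rate_def)
  have "decays_at_least (\<lambda>T. measure M (lower_tail u T \<inter> upper_tail v T))
      (r\<^sub>i * Xi.rate u + r\<^sub>j * Xj.rate v - \<epsilon> / 2)"
    using mem_window uv \<epsilon> by (intro both_tails_decay) auto
  then show ?thesis using rate by (rule decays_at_least_mono) simp
qed

lemma misorder_decays_at_least:
  assumes \<epsilon>: "\<epsilon> > 0"
  shows "decays_at_least (\<lambda>T. measure M (misorder T)) (pair_rate - \<epsilon>)"
proof -
  define L where "L = (A\<^sub>i + 1) / d"
  define N where "N = nat \<lceil>2 * r\<^sub>i * L * (\<mu>\<^sub>i - \<mu>\<^sub>j) / \<epsilon>\<rceil> + 1"
  define x where "x q = \<mu>\<^sub>j + real q * (\<mu>\<^sub>i - \<mu>\<^sub>j) / real N" for q :: nat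
  have N: "N > 0" by (simp add: N_def)
  have "2 * r\<^sub>i * L * (\<mu>\<^sub>i - \<mu>\<^sub>j) / \<epsilon> \<le> real N"
    unfolding N_def using real_nat_ceiling_ge[of "2 * r\<^sub>i * L * (\<mu>\<^sub>i - \<mu>\<^sub>j) / \<epsilon>"] by linarith
  then have step: "r\<^sub>i * L * ((\<mu>\<^sub>i - \<mu>\<^sub>j) / real N) \<le> \<epsilon> / 2"
    using \<epsilon> N by (simp add: field_simps)
  have x: "x q \<in> {\<mu>\<^sub>j..\<mu>\<^sub>i}" if "q \<le> N" for q
  proof -
    have "real q * (\<mu>\<^sub>i - \<mu>\<^sub>j) \<le> real N * (\<mu>\<^sub>i - \<mu>\<^sub>j)"
      using that mean_less by (intro mult_right_mono) auto
    then have "real q * (\<mu>\<^sub>i - \<mu>\<^sub>j) / real N \<le> \<mu>\<^sub>i - \<mu>\<^sub>j"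
      using N by (simp add: divide_le_eq mult.commute)
    then show ?thesis using mean_less by (simp add: x_def)
  qed
  have "decays_at_least (\<lambda>T. measure M (lower_tail (x q) T \<inter> upper_tail (x (q - 1)) T)) (pair_rate - \<epsilon>)"
    if q: "q \<in> {1..N}" for q
  proof (rule grid_tails_decay[OF x x _ _ \<epsilon>])
    have "x q - x (q - 1) = (\<mu>\<^sub>i - \<mu>\<^sub>j) / real N" using q by (simp add: x_def of_nat_diff field_simps)
    moreover have "(\<mu>\<^sub>i - \<mu>\<^sub>j) / real N > 0" using mean_less N by simp
    ultimately show "x (q - 1) \<le> x q" "r\<^sub>i * ((A\<^sub>i + 1) / d) * (x q - x (q - 1)) \<le> \<epsilon> / 2"
      using step by (simp_all add: L_def[symmetric])
  qed (use q in auto)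
  then have "decays_at_least (\<lambda>T. measure M (lower_tail \<mu>\<^sub>j T) + measure M (upper_tail \<mu>\<^sub>i T)
      + (\<Sum>q\<in>{1..N}. measure M (lower_tail (x q) T \<inter> upper_tail (x (q - 1)) T))) (pair_rate - \<epsilon>)"
    by (intro decays_at_least_add decays_at_least_sum lower_tail_decays upper_tail_decays \<epsilon>) auto
  then show ?thesis
    by (rule decays_at_least_mono[OF _ order_refl]) (use measure_misorder_le[OF _ N] in \<open>simp add: x_def\<close>)
qed

lemma tilts_near_pair_rate:
  assumes \<epsilon>: "\<epsilon> > 0"
  obtains ei ej where "ei \<in> interior Xi.mgf_domain" "ej \<in> interior Xj.mgf_domain"
    "Xi.tilted_mean ei < Xj.tilted_mean ej"
    "r\<^sub>i * Xi.rate (Xi.tilted_mean ei) + r\<^sub>j * Xj.rate (Xj.tilted_mean ej) < pair_rate + \<epsilon>"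
proof -
  have "\<epsilon> / 2 > 0" using \<epsilon> by simp
  then obtain y where y: "y \<in> {\<mu>\<^sub>j..\<mu>\<^sub>i}" "combined_rate y < pair_rate + \<epsilon> / 2"
    by (rule pair_rate_approx)
  obtain \<delta>\<^sub>i \<delta>\<^sub>j where
    \<delta>\<^sub>i: "\<delta>\<^sub>i > 0" "\<And>\<delta>. \<bar>\<delta>\<bar> \<le> \<delta>\<^sub>i \<Longrightarrow> \<exists>\<theta>\<in>interior Xi.mgf_domain. Xi.tilted_mean \<theta> = y + \<delta>" and
    \<delta>\<^sub>j: "\<delta>\<^sub>j > 0" "\<And>\<delta>. \<bar>\<delta>\<bar> \<le> \<delta>\<^sub>j \<Longrightarrow> \<exists>\<theta>\<in>interior Xj.mgf_domain. Xj.tilted_mean \<theta> = y + \<delta>"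
    using subsetD[OF interior_i y(1)] subsetD[OF interior_j y(1)]
    by (metis Xi.tilted_means_near Xj.tilted_means_near)
  define L where "L = r\<^sub>i * ((A\<^sub>i + 1) / d) + r\<^sub>j * ((A\<^sub>j + 1) / d)"
  have "L \<ge> 0"
    using Xi.coercive_const_nonneg[OF coercive_i] Xj.coercive_const_nonneg[OF coercive_j]
      Xi.coercive_pos[OF coercive_i] mean_less r_pos by (simp add: L_def)
  define \<delta> where "\<delta> = min (min d \<delta>\<^sub>i) (min \<delta>\<^sub>j (\<epsilon> / (2 * (L + 1))))"
  have \<delta>: "\<delta> > 0" "\<delta> \<le> d" "\<delta> \<le> \<delta>\<^sub>i" "\<delta> \<le> \<delta>\<^sub>j" "\<delta> * L \<le> \<epsilon> / 2"
  proof -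
    show "\<delta> > 0" "\<delta> \<le> d" "\<delta> \<le> \<delta>\<^sub>i" "\<delta> \<le> \<delta>\<^sub>j"
      using \<delta>\<^sub>i(1) \<delta>\<^sub>j(1) \<epsilon> \<open>L \<ge> 0\<close> Xi.coercive_pos[OF coercive_i] by (simp_all add: \<delta>_def)
    have "\<delta> \<le> \<epsilon> / (2 * (L + 1))" unfolding \<delta>_def by (intro min.coboundedI2 min.cobounded2)
    then have "\<delta> * (L + 1) \<le> \<epsilon> / 2" using \<open>L \<ge> 0\<close> by (simp add: field_simps)
    then show "\<delta> * L \<le> \<epsilon> / 2" using \<open>\<delta> > 0\<close> by (simp add: algebra_simps)
  qed
  obtain ei ej where ei: "ei \<in> interior Xi.mgf_domain" "Xi.tilted_mean ei = y - \<delta>"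
    and ej: "ej \<in> interior Xj.mgf_domain" "Xj.tilted_mean ej = y + \<delta>"
    using \<delta>\<^sub>i(2)[of "- \<delta>"] \<delta>\<^sub>j(2)[of \<delta>] \<delta> by auto
  have window: "y \<in> {\<mu>\<^sub>j - d..\<mu>\<^sub>i + d}" "y - \<delta> \<in> {\<mu>\<^sub>j - d..\<mu>\<^sub>i + d}" "y + \<delta> \<in> {\<mu>\<^sub>j - d..\<mu>\<^sub>i + d}"
    using y(1) \<delta> by auto
  have "r\<^sub>i * Xi.rate (y - \<delta>) \<le> r\<^sub>i * (Xi.rate y + (A\<^sub>i + 1) / d * \<delta>)"
    "r\<^sub>j * Xj.rate (y + \<delta>) \<le> r\<^sub>j * (Xj.rate y + (A\<^sub>j + 1) / d * \<delta>)"
    using Xi.rate_lipschitz[OF coercive_i window(2,1)] Xj.rate_lipschitz[OF coercive_j window(3,1)] \<delta> r_pos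
    by (simp_all add: mult_left_mono)
  then have "r\<^sub>i * Xi.rate (y - \<delta>) + r\<^sub>j * Xj.rate (y + \<delta>) \<le> combined_rate y + \<delta> * L"
    unfolding combined_rate_def L_def by (simp add: algebra_simps)
  then show ?thesis using that[OF ei(1) ej(1)] ei(2) ej(2) \<delta> y(2) by simp
qed

lemma box_subset_misorder:
  "a + \<rho> \<le> b - \<rho> \<Longrightarrow> box (sample_size r\<^sub>i T) (sample_size r\<^sub>j T) a b \<rho> \<subseteq> misorder T"
  by (auto simp: box_def misorder_def smean_eq_psum abs_less_iff)

lemma misorder_decays_at_most_box:
  assumes ei: "ei \<in> interior Xi.mgf_domain" and ej: "ej \<in> interior Xj.mgf_domain" and \<rho>: "\<rho> > 0"
    and sep: "Xi.tilted_mean ei + \<rho> \<le> Xj.tilted_mean ej - \<rho>"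
  shows "decays_at_most (\<lambda>T. measure M (misorder T))
    (r\<^sub>i * (Xi.rate (Xi.tilted_mean ei) + \<bar>ei\<bar> * \<rho>) + r\<^sub>j * (Xj.rate (Xj.tilted_mean ej) + \<bar>ej\<bar> * \<rho>))"
    (is "decays_at_most _ (r\<^sub>i * ?c\<^sub>i + r\<^sub>j * ?c\<^sub>j)")
proof -
  obtain N where N: "\<And>n m. N \<le> n \<Longrightarrow> N \<le> m \<Longrightarrow> exp (- real n * ?c\<^sub>i - real m * ?c\<^sub>j) / 2
      \<le> measure M (box n m (Xi.tilted_mean ei) (Xj.tilted_mean ej) \<rho>)"
    using box_lower_bound[OF ei ej \<rho>] by blast
  have c: "0 \<le> ?c\<^sub>i" "0 \<le> ?c\<^sub>j" using Xi.rate_nonneg Xj.rate_nonneg \<rho> by simp_all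
  have "exp (- ln 2 - ?c\<^sub>i - ?c\<^sub>j - T * (r\<^sub>i * ?c\<^sub>i + r\<^sub>j * ?c\<^sub>j)) \<le> measure M (misorder T)"
    if T: "T \<ge> real N / r\<^sub>i + real N / r\<^sub>j + 1" for T
  proof -
    have "real N / r\<^sub>i \<ge> 0" "real N / r\<^sub>j \<ge> 0" using r_pos by simp_all
    then have "T > 0" "real N / r\<^sub>i \<le> T" "real N / r\<^sub>j \<le> T" using T by linarith+
    then have T0: "T > 0" "real N \<le> r\<^sub>i * T" "real N \<le> r\<^sub>j * T"
      using r_pos by (simp_all add: pos_divide_le_eq mult.commute)
    note n = sample_size_bounds[OF r_pos(1) T0(1)] and m = sample_size_bounds[OF r_pos(2) T0(1)]
    have "N \<le> sample_size r\<^sub>i T" "N \<le> sample_size r\<^sub>j T" using n(1) m(1) T0 by linarith+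
    then have "exp (- ln 2 - ?c\<^sub>i - ?c\<^sub>j - T * (r\<^sub>i * ?c\<^sub>i + r\<^sub>j * ?c\<^sub>j))
        \<le> measure M (box (sample_size r\<^sub>i T) (sample_size r\<^sub>j T) (Xi.tilted_mean ei) (Xj.tilted_mean ej) \<rho>)"
      using exp_sample_counts_ge[OF n(2) m(2) c order_refl] N T0(1) by (meson less_imp_le order_trans)
    also have "\<dots> \<le> measure M (misorder T)"
      by (rule finite_measure_mono[OF box_subset_misorder[OF sep] sets_misorder])
    finally show ?thesis .
  qed
  then show ?thesis unfolding decays_at_most_def eventually_at_top_linorder by blast
qed

lemma misorder_decays_at_most:
  assumes \<epsilon>: "\<epsilon> > 0"
  shows "decays_at_most (\<lambda>T. measure M (misorder T)) (pair_rate + \<epsilon>)"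
proof -
  have "\<epsilon> / 2 > 0" using \<epsilon> by simp
  then obtain ei ej where ei: "ei \<in> interior Xi.mgf_domain" and ej: "ej \<in> interior Xj.mgf_domain"
    and ab: "Xi.tilted_mean ei < Xj.tilted_mean ej"
    and rate: "r\<^sub>i * Xi.rate (Xi.tilted_mean ei) + r\<^sub>j * Xj.rate (Xj.tilted_mean ej) < pair_rate + \<epsilon> / 2"
    by (rule tilts_near_pair_rate)
  define w where "w = r\<^sub>i * \<bar>ei\<bar> + r\<^sub>j * \<bar>ej\<bar>"
  define \<rho> where "\<rho> = min ((Xj.tilted_mean ej - Xi.tilted_mean ei) / 2) (\<epsilon> / (2 * (w + 1)))"
  have w: "w \<ge> 0" using r_pos by (simp add: w_def)
  have "\<rho> \<le> (Xj.tilted_mean ej - Xi.tilted_mean ei) / 2" "\<rho> \<le> \<epsilon> / (2 * (w + 1))"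
    unfolding \<rho>_def by (rule min.cobounded1, rule min.cobounded2)
  moreover have "\<rho> > 0" using ab \<epsilon> w by (simp add: \<rho>_def)
  ultimately have \<rho>: "\<rho> > 0" "Xi.tilted_mean ei + \<rho> \<le> Xj.tilted_mean ej - \<rho>" "\<rho> * w \<le> \<epsilon> / 2"
    using w by (simp_all add: field_simps)
  then have "r\<^sub>i * (Xi.rate (Xi.tilted_mean ei) + \<bar>ei\<bar> * \<rho>) + r\<^sub>j * (Xj.rate (Xj.tilted_mean ej) + \<bar>ej\<bar> * \<rho>)
      \<le> pair_rate + \<epsilon>"
    using rate by (simp add: w_def algebra_simps)
  with misorder_decays_at_most_box[OF ei ej \<rho>(1,2)] show ?thesis
    by (rule decays_at_most_mono) simp
qed

end

section \<open>Selecting the best alternatives\<close>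

context iid_family
begin

lemma pair_decays:
  assumes i: "i \<in> {1..k}" and j: "j \<in> {1..k}" and r: "r\<^sub>i > 0" "r\<^sub>j > 0"
    and mean_less: "expectation (X j 0) < expectation (X i 0)"
    and interior_i: "{expectation (X j 0)..expectation (X i 0)} \<subseteq> interior (Fset (real_rv.cgf M (X i 0)))"
    and interior_j: "{expectation (X j 0)..expectation (X i 0)} \<subseteq> interior (Fset (real_rv.cgf M (X j 0)))"
  obtains g where "Grate (real_rv.cgf M (X i 0)) (real_rv.cgf M (X j 0)) r\<^sub>i r\<^sub>j = ereal g"
    "\<And>\<epsilon>. \<epsilon> > 0 \<Longrightarrow> decays_at_least (\<lambda>T. measure M {\<omega> \<in> space M.
        smean (X i) (sample_size r\<^sub>i T) \<omega> \<le> smean (X j) (sample_size r\<^sub>j T) \<omega>}) (g - \<epsilon>)"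
    "\<And>\<epsilon>. \<epsilon> > 0 \<Longrightarrow> decays_at_most (\<lambda>T. measure M {\<omega> \<in> space M.
        smean (X i) (sample_size r\<^sub>i T) \<omega> \<le> smean (X j) (sample_size r\<^sub>j T) \<omega>}) (g + \<epsilon>)"
proof -
  have "i \<noteq> j" using mean_less by auto
  then interpret alternative_pair M X k i j
    by (intro alternative_pair.intro iid_family_axioms alternative_pair_axioms.intro i j)
  have le: "expectation (X j 0) \<le> expectation (X i 0)" using mean_less by simp
  have int_i: "{expectation (X j 0)..expectation (X i 0)} \<subseteq> interior (Xi.tilted_mean ` interior Xi.mgf_domain)"
    and int_j: "{expectation (X j 0)..expectation (X i 0)} \<subseteq> interior (Xj.tilted_mean ` interior Xj.mgf_domain)"
    using interior_i interior_j by (simp_all only: Xi.Fset_cgf Xj.Fset_cgf)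
  obtain A\<^sub>i d\<^sub>i where ci: "Xi.legendre_coercive (expectation (X j 0)) (expectation (X i 0)) A\<^sub>i d\<^sub>i"
    by (rule Xi.legendre_coercive_exists[OF le int_i])
  obtain A\<^sub>j d\<^sub>j where cj: "Xj.legendre_coercive (expectation (X j 0)) (expectation (X i 0)) A\<^sub>j d\<^sub>j"
    by (rule Xj.legendre_coercive_exists[OF le int_j])
  define d where "d = min d\<^sub>i d\<^sub>j"
  have d: "0 < d" "d \<le> d\<^sub>i" "d \<le> d\<^sub>j"
    using Xi.coercive_pos[OF ci] Xj.coercive_pos[OF cj] by (auto simp: d_def)
  interpret pair_rates M X k i j r\<^sub>i r\<^sub>j A\<^sub>i A\<^sub>j d
    by (intro pair_rates.intro alternative_pair_axioms pair_rates_axioms.intro r mean_less int_i int_j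
        Xi.legendre_coercive_mono[OF ci d(1,2)] Xj.legendre_coercive_mono[OF cj d(1,3)])
  show ?thesis
    using that[OF Grate_eq_pair_rate] misorder_decays_at_least misorder_decays_at_most
    by (simp add: misorder_def)
qed

lemma sets_smean_le:
  "l \<in> {1..k} \<Longrightarrow> l' \<in> {1..k} \<Longrightarrow> {\<omega> \<in> space M. smean (X l) n \<omega> \<le> smean (X l') n' \<omega>} \<in> sets M"
  unfolding smean_eq_psum by measurable

lemma selection_pair_decays:
  fixes \<sigma> :: "nat \<Rightarrow> nat" and \<mu> r :: "nat \<Rightarrow> real"
  assumes sigma: "bij_betw \<sigma> {1..k} {1..k}"
    and order: "\<And>i. i \<in> {1..<k} \<Longrightarrow> \<mu> (\<sigma> (Suc i)) < \<mu> (\<sigma> i)"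
    and mean: "\<And>l. l \<in> {1..k} \<Longrightarrow> expectation (X l 0) = \<mu> l"
    and F: "{\<mu> (\<sigma> k)..\<mu> (\<sigma> 1)} \<subseteq> (\<Inter>l\<in>{1..k}. interior (Fset (real_rv.cgf M (X l 0))))"
    and r: "\<And>l. l \<in> {1..k} \<Longrightarrow> r l > 0"
    and ab: "1 \<le> a" "a < b" "b \<le> k"
  obtains g where "Grate (real_rv.cgf M (X (\<sigma> a) 0)) (real_rv.cgf M (X (\<sigma> b) 0)) (r (\<sigma> a)) (r (\<sigma> b)) = ereal g"
    "\<And>\<epsilon>. \<epsilon> > 0 \<Longrightarrow> decays_at_least (\<lambda>T. measure M {\<omega> \<in> space M.
        smean (X (\<sigma> a)) (sample_size (r (\<sigma> a)) T) \<omega> \<le> smean (X (\<sigma> b)) (sample_size (r (\<sigma> b)) T) \<omega>}) (g - \<epsilon>)"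
    "\<And>\<epsilon>. \<epsilon> > 0 \<Longrightarrow> decays_at_most (\<lambda>T. measure M {\<omega> \<in> space M.
        smean (X (\<sigma> a)) (sample_size (r (\<sigma> a)) T) \<omega> \<le> smean (X (\<sigma> b)) (sample_size (r (\<sigma> b)) T) \<omega>}) (g + \<epsilon>)"
proof -
  have less: "\<mu> (\<sigma> b') < \<mu> (\<sigma> a')" if "1 \<le> a'" "a' < b'" "b' \<le> k" for a' b'
    using lift_Suc_mono_less_ivl[of "{1..<k}" "\<lambda>n. - \<mu> (\<sigma> n)" a' b'] order that by auto
  have le: "\<mu> (\<sigma> k) \<le> \<mu> (\<sigma> b)" "\<mu> (\<sigma> a) \<le> \<mu> (\<sigma> 1)"
    using less[of b k] less[of 1 a] ab by (cases "b = k"; cases "a = 1"; simp)+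
  have \<sigma>: "\<sigma> a \<in> {1..k}" "\<sigma> b \<in> {1..k}" using ab bij_betw_apply[OF sigma] by auto
  have "{expectation (X (\<sigma> b) 0)..expectation (X (\<sigma> a) 0)} \<subseteq> {\<mu> (\<sigma> k)..\<mu> (\<sigma> 1)}"
    using le by (auto simp: mean[OF \<sigma>(1)] mean[OF \<sigma>(2)])
  with F \<sigma> have "{expectation (X (\<sigma> b) 0)..expectation (X (\<sigma> a) 0)} \<subseteq> interior (Fset (real_rv.cgf M (X (\<sigma> a) 0)))"
    "{expectation (X (\<sigma> b) 0)..expectation (X (\<sigma> a) 0)} \<subseteq> interior (Fset (real_rv.cgf M (X (\<sigma> b) 0)))"
    by blast+
  moreover have "expectation (X (\<sigma> b) 0) < expectation (X (\<sigma> a) 0)"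
    using less[OF ab] by (simp add: mean[OF \<sigma>(1)] mean[OF \<sigma>(2)])
  ultimately show ?thesis
    using pair_decays[OF \<sigma> r[OF \<sigma>(1)] r[OF \<sigma>(2)]] that by blast
qed

lemma misselection_tendsto:
  fixes \<sigma> :: "nat \<Rightarrow> nat" and \<mu> r :: "nat \<Rightarrow> real"
  assumes sigma: "bij_betw \<sigma> {1..k} {1..k}"
    and order: "\<And>i. i \<in> {1..<k} \<Longrightarrow> \<mu> (\<sigma> (Suc i)) < \<mu> (\<sigma> i)"
    and mean: "\<And>l. l \<in> {1..k} \<Longrightarrow> expectation (X l 0) = \<mu> l"
    and F: "{\<mu> (\<sigma> k)..\<mu> (\<sigma> 1)} \<subseteq> (\<Inter>l\<in>{1..k}. interior (Fset (real_rv.cgf M (X l 0))))"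
    and r: "\<And>l. l \<in> {1..k} \<Longrightarrow> r l > 0"
    and m: "1 \<le> m" "m < k"
  shows "((\<lambda>T. ereal (ln (measure M {\<omega> \<in> space M. \<exists>i\<in>{1..m}. \<exists>j\<in>{m+1..k}.
        smean (X (\<sigma> i)) (sample_size (r (\<sigma> i)) T) \<omega> \<le> smean (X (\<sigma> j)) (sample_size (r (\<sigma> j)) T) \<omega>}) / T))
      \<longlongrightarrow> - Min ((\<lambda>(i, j). Grate (real_rv.cgf M (X (\<sigma> i) 0)) (real_rv.cgf M (X (\<sigma> j) 0)) (r (\<sigma> i)) (r (\<sigma> j)))
                 ` ({1..m} \<times> {m+1..k}))) at_top"
proof -
  define P where "P = {1..m} \<times> {m+1..k}"
  define E where "E p T = {\<omega> \<in> space M. smean (X (\<sigma> (fst p))) (sample_size (r (\<sigma> (fst p))) T) \<omega>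
      \<le> smean (X (\<sigma> (snd p))) (sample_size (r (\<sigma> (snd p))) T) \<omega>}" for p T
  have "\<exists>g. Grate (real_rv.cgf M (X (\<sigma> (fst p)) 0)) (real_rv.cgf M (X (\<sigma> (snd p)) 0))
        (r (\<sigma> (fst p))) (r (\<sigma> (snd p))) = ereal g
      \<and> (\<forall>\<epsilon>>0. decays_at_least (\<lambda>T. measure M (E p T)) (g - \<epsilon>))
      \<and> (\<forall>\<epsilon>>0. decays_at_most (\<lambda>T. measure M (E p T)) (g + \<epsilon>))" if "p \<in> P" for p
  proof -
    have "1 \<le> fst p" "fst p < snd p" "snd p \<le> k" using that m by (auto simp: P_def)
    then obtain g where "Grate (real_rv.cgf M (X (\<sigma> (fst p)) 0)) (real_rv.cgf M (X (\<sigma> (snd p)) 0))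
        (r (\<sigma> (fst p))) (r (\<sigma> (snd p))) = ereal g"
      "\<And>\<epsilon>. \<epsilon> > 0 \<Longrightarrow> decays_at_least (\<lambda>T. measure M (E p T)) (g - \<epsilon>)"
      "\<And>\<epsilon>. \<epsilon> > 0 \<Longrightarrow> decays_at_most (\<lambda>T. measure M (E p T)) (g + \<epsilon>)"
      using selection_pair_decays[where r = r, OF sigma order mean F r] unfolding E_def by blast
    then show ?thesis by blast
  qed
  then obtain g where g: "\<And>p. p \<in> P \<Longrightarrow> Grate (real_rv.cgf M (X (\<sigma> (fst p)) 0))
        (real_rv.cgf M (X (\<sigma> (snd p)) 0)) (r (\<sigma> (fst p))) (r (\<sigma> (snd p))) = ereal (g p)"
    "\<And>p \<epsilon>. p \<in> P \<Longrightarrow> \<epsilon> > 0 \<Longrightarrow> decays_at_least (\<lambda>T. measure M (E p T)) (g p - \<epsilon>)"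
    "\<And>p \<epsilon>. p \<in> P \<Longrightarrow> \<epsilon> > 0 \<Longrightarrow> decays_at_most (\<lambda>T. measure M (E p T)) (g p + \<epsilon>)"
    by metis
  have P: "finite P" "P \<noteq> {}" using m by (auto simp: P_def)
  have sets_E: "E p T \<in> sets M" if "p \<in> P" for p T
    using that m unfolding E_def P_def by (intro sets_smean_le bij_betw_apply[OF sigma]) auto
  have "((\<lambda>T. ln (measure M (\<Union>p\<in>P. E p T)) / T) \<longlongrightarrow> - Min (g ` P)) at_top"
    using P sets_E g(2,3) by (rule tendsto_ln_measure_UNION)
  moreover have "{\<omega> \<in> space M. \<exists>i\<in>{1..m}. \<exists>j\<in>{m+1..k}. smean (X (\<sigma> i)) (sample_size (r (\<sigma> i)) T) \<omega>
      \<le> smean (X (\<sigma> j)) (sample_size (r (\<sigma> j)) T) \<omega>} = (\<Union>p\<in>P. E p T)" for T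
    unfolding E_def P_def by (rule Collect_Bex_Times_eq_UN)
  moreover have "(\<lambda>(i, j). Grate (real_rv.cgf M (X (\<sigma> i) 0)) (real_rv.cgf M (X (\<sigma> j) 0)) (r (\<sigma> i)) (r (\<sigma> j)))
      ` ({1..m} \<times> {m+1..k}) = ereal ` g ` P"
    using g(1) unfolding P_def[symmetric] image_image by (intro image_cong) auto
  moreover have "Min (ereal ` g ` P) = ereal (Min (g ` P))" using P by (intro Min_ereal_image) auto
  ultimately show ?thesis by (simp add: tendsto_ereal)
qed

end

theorem theorem2:
  fixes M :: "'a measure"
    and X :: "nat \<Rightarrow> nat \<Rightarrow> 'a \<Rightarrow> real"
    and \<mu> :: "nat \<Rightarrow> real"
    and \<sigma> :: "nat \<Rightarrow> nat"
    and r :: "nat \<Rightarrow> real"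
    and Lam :: "nat \<Rightarrow> real \<Rightarrow> ereal"
    and k m :: nat
  assumes P: "prob_space M"
    and k2: "k \<ge> 2" and m1: "1 \<le> m" and mk: "m < k"
    and rv: "\<And>l t. l \<in> {1..k} \<Longrightarrow> X l t \<in> borel_measurable M"
    and indep: "prob_space.indep_vars M (\<lambda>_. borel) (\<lambda>p. X (fst p) (snd p)) ({1..k} \<times> UNIV)"
    and ident: "\<And>l t. l \<in> {1..k} \<Longrightarrow> distr M borel (X l t) = distr M borel (X l 0)"
    and integ: "\<And>l. l \<in> {1..k} \<Longrightarrow> integrable M (X l 0)"
    and mean: "\<And>l. l \<in> {1..k} \<Longrightarrow> (\<integral>\<omega>. X l 0 \<omega> \<partial>M) = \<mu> l"
    and sigma: "bij_betw \<sigma> {1..k} {1..k}"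
    and order: "\<And>i. i \<in> {1..<k} \<Longrightarrow> \<mu> (\<sigma> i) > \<mu> (\<sigma> (Suc i))"
    and A1: "\<And>l lam. l \<in> {1..k} \<Longrightarrow>
          ((\<lambda>n. cgf_n M (X l) n (real n * lam) / ereal (real n)) \<longlongrightarrow> Lam l lam) sequentially"
    and A2: "\<And>l. l \<in> {1..k} \<Longrightarrow> 0 \<in> interior (edom (Lam l))"
    and A3: "\<And>l. l \<in> {1..k} \<Longrightarrow>
          strictly_convex_on (interior (edom (Lam l))) (rpart (Lam l))
          \<and> continuous_on (interior (edom (Lam l))) (rpart (Lam l))
          \<and> steep (Lam l)"
    and A4: "{\<mu> (\<sigma> k)..\<mu> (\<sigma> 1)} \<subseteq> (\<Inter>l\<in>{1..k}. interior (Fset (Lam l)))"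
    and rpos: "\<And>l. l \<in> {1..k} \<Longrightarrow> r l > 0"
    and rsum: "(\<Sum>l\<in>{1..k}. r l) = 1"
  shows "((\<lambda>T::real. ereal (ln (measure M {\<omega> \<in> space M.
            \<exists>i\<in>{1..m}. \<exists>j\<in>{m+1..k}.
              smean (X (\<sigma> i)) (nat \<lceil>r (\<sigma> i) * T\<rceil>) \<omega>
                \<le> smean (X (\<sigma> j)) (nat \<lceil>r (\<sigma> j) * T\<rceil>) \<omega>}) / T))
          \<longlongrightarrow> - Min ((\<lambda>(i, j). Grate (Lam (\<sigma> i)) (Lam (\<sigma> j)) (r (\<sigma> i)) (r (\<sigma> j)))
                        ` ({1..m} \<times> {m+1..k}))) at_top"
proof -
  interpret iid_family M X k
    by (rule iid_family.intro[OF P iid_family_axioms.intro[OF rv indep ident integ]])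
  have Lam: "Lam l = real_rv.cgf M (X l 0)" if "l \<in> {1..k}" for l
    using cgf_limit_eq[OF that A1[OF that]] by (rule ext)
  have "{\<mu> (\<sigma> k)..\<mu> (\<sigma> 1)} \<subseteq> (\<Inter>l\<in>{1..k}. interior (Fset (real_rv.cgf M (X l 0))))"
    using A4 Lam by auto
  note tendsto = misselection_tendsto[OF sigma order mean this rpos m1 mk]
  have "(\<lambda>(i, j). Grate (Lam (\<sigma> i)) (Lam (\<sigma> j)) (r (\<sigma> i)) (r (\<sigma> j))) ` ({1..m} \<times> {m+1..k})
    = (\<lambda>(i, j). Grate (real_rv.cgf M (X (\<sigma> i) 0)) (real_rv.cgf M (X (\<sigma> j) 0)) (r (\<sigma> i)) (r (\<sigma> j)))
      ` ({1..m} \<times> {m+1..k})"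
    using Lam bij_betw_apply[OF sigma] mk by (intro image_cong) auto
  with tendsto show ?thesis by (simp add: sample_size_def)
qed

end
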